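(* Let $n\ge1$. Then: (i) $|LP_n|=\frac{1}{n+1}\binom{2n}{n}$. (ii) For $1\le k\le n$, the number of $\sigma\in LP_n$ with exposure number $\operatorname{ex}(\sigma)=k$ equals $\binom{2n-k}{n}\frac{k}{2n-k}$. (iii) For $0\le \ell\le n-1$, the number of $\sigma\in LP_n$ with interaction number $\operatorname{int}(\sigma)=\ell$ equals $\frac{1}{n}\binom{n}{\ell+1}\binom{n}{\ell}$.
   Context: For a positive integer $m$, a link pattern of $m$ strands is a non-crossing perfect matching of $\{0,1,\dots,2m-1\}$, i.e. there are no two pairs $\{a,b\},\{c,d\}$ with $a<c<b<d$. Let $LP_m$ be the set of link patterns of $m$ strands. For $i\in\{0,\dots,2m-1\}$, with indices taken mod $2m$, the map $e_i:LP_m\to LP_m$ is defined as follows. If $\sigma$ pairs $i$ with $i+1$, then $e_i(\sigma)=\sigma$. Otherwise, if $\sigma$ pairs $i$ with $a$ and $i+1$ with $b$, then $e_i(\sigma)$ pairs $i$ with $i+1$ and $a$ with $b$, keeping all other pairs. Exposure number: place the points of $\sigma\in LP_m$ on a line in the order $1,2,\dots,2m-1,0$. A pair $\{a,b\}$, with $a$ before $b$, is an outermost link if there is no other pair $\{c,d\}$ with $c$ before $a$ and $b$ before $d$. The exposure number $\operatorname{ex}(\sigma)$ is the number of outermost links. For $\pi\in LP_{m-1}$, $\pi^+\in LP_m$ consists of the pair $\{2m-1,0\}$ together with the pairs $\{\varphi(a),\varphi(b)\}$ for each pair $\{a,b\}$ of $\pi$, where $\varphi(j)=j$ for $1\le j\le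 2m-3$ and $\varphi(0)=2m-2$. For every $\sigma\in LP_m$ with $m\ge2$, there is a unique parent $p(\sigma)\in LP_{m-1}$ with $e_{2m-1}(\sigma)=p(\sigma)^+$. Interaction number: for $\sigma\in LP_n$, set $\sigma_n=\sigma$ and $\sigma_{j-1}=p(\sigma_j)$ for $j=n,n-1,\dots,2$. The interaction number $\operatorname{int}(\sigma)$ is the number of indices $j\in\{2,\dots,n\}$ such that $\sigma_j\neq(\sigma_{j-1})^+$, i.e. such that $\sigma_j$ does not pair $2j-1$ with $0$. The unique element of $LP_1$ has interaction number $0$. *)

theory Defs
  imports Complex_Main
begin

type_synonym linkpat = "nat set set"

definition LP :: "nat \<Rightarrow> linkpat set" where
  "LP m = {\<sigma>.
     (\<forall>p\<in>\<sigma>. \<exists>a b. p = {a, b} \<and> a \<noteq> b \<and> a < 2*m \<and> b < 2*m) \<and>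
     (\<forall>x<2*m. \<exists>!p. p \<in> \<sigma> \<and> x \<in> p) \<and>
     \<not> (\<exists>a b c d. {a, b} \<in> \<sigma> \<and> {c, d} \<in> \<sigma> \<and> a < c \<and> c < b \<and> b < d)}"

definition partner :: "linkpat \<Rightarrow> nat \<Rightarrow> nat" where
  "partner \<sigma> x = (THE y. {x, y} \<in> \<sigma> \<and> y \<noteq> x)"

definition e_op :: "nat \<Rightarrow> nat \<Rightarrow> linkpat \<Rightarrow> linkpat" where
  "e_op m i \<sigma> =
     (let j = (i + 1) mod (2*m) in
      if {i, j} \<in> \<sigma> then \<sigma>
      else (\<sigma> - {{i, partner \<sigma> i}, {j, partner \<sigma> j}})
             \<union> {{i, j}, {partner \<sigma> i, partner \<sigma> j}})"

text \<open>Exposure number: points placed in the order 1,2,...,2m-1,0.\<close>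
definition expos :: "nat \<Rightarrow> nat \<Rightarrow> nat" where
  "expos m x = (if x = 0 then 2*m else x)"

definition encloses :: "nat \<Rightarrow> nat set \<Rightarrow> nat set \<Rightarrow> bool" where
  "encloses m q p \<longleftrightarrow>
     Min (expos m ` q) < Min (expos m ` p) \<and> Max (expos m ` p) < Max (expos m ` q)"

definition ex :: "nat \<Rightarrow> linkpat \<Rightarrow> nat" where
  "ex m \<sigma> = card {p \<in> \<sigma>. \<not> (\<exists>q\<in>\<sigma>. q \<noteq> p \<and> encloses m q p)}"

definition phi :: "nat \<Rightarrow> nat \<Rightarrow> nat" where
  "phi m j = (if j = 0 then 2*m - 2 else j)"

definition plus :: "nat \<Rightarrow> linkpat \<Rightarrow> linkpat" where
  "plus m \<pi> = insert {2*m - 1, 0} ((\<lambda>p. phi m ` p) ` \<pi>)"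

definition parent :: "nat \<Rightarrow> linkpat \<Rightarrow> linkpat" where
  "parent m \<sigma> = (THE \<pi>. \<pi> \<in> LP (m - 1) \<and> e_op m (2*m - 1) \<sigma> = plus m \<pi>)"

text \<open>anc n k \<sigma> is \<sigma>_{n-k} in the chain \<sigma>_n = \<sigma>, \<sigma>_{j-1} = p(\<sigma>_j).\<close>
fun anc :: "nat \<Rightarrow> nat \<Rightarrow> linkpat \<Rightarrow> linkpat" where
  "anc n 0 \<sigma> = \<sigma>"
| "anc n (Suc k) \<sigma> = parent (n - k) (anc n k \<sigma>)"

definition sigma_at :: "nat \<Rightarrow> linkpat \<Rightarrow> nat \<Rightarrow> linkpat" where
  "sigma_at n \<sigma> j = anc n (n - j) \<sigma>"

definition interaction :: "nat \<Rightarrow> linkpat \<Rightarrow> nat" where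
  "interaction n \<sigma> =
     card {j \<in> {2..n}. sigma_at n \<sigma> j \<noteq> plus j (sigma_at n \<sigma> (j - 1))}"

end

theory Submission
  imports Defs
begin

text \<open>
  Every \<open>\<sigma> \<in> LP\<^sub>m\<^sub>+\<^sub>1\<close> is seen through its parent \<open>\<pi> = p(\<sigma>)\<close>. Either \<open>\<sigma> = \<pi>\<^sup>+\<close>, and then
  \<open>ex \<sigma> = ex \<pi> + 1\<close> and \<open>int \<sigma> = int \<pi>\<close>; or \<open>\<sigma>\<close> arises from \<open>\<pi>\<close> by splitting one of its
  outermost links into links ending at \<open>2m + 1\<close> and \<open>0\<close>. Splitting the \<open>j\<close>-th outermost link
  (from the left) gives exposure number \<open>j\<close> and interaction number \<open>int \<pi> + 1\<close>, and each such
  \<open>\<sigma>\<close> arises exactly once. So the numbers \<open>N(n, k, l)\<close> of patterns with \<open>ex = k\<close> and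
  \<open>int = l\<close> satisfy \<open>N(m + 1, k, l + 1) = N(m, k - 1, l + 1) + \<Sum>\<^sub>i\<^sub>\<ge>\<^sub>k N(m, i, l)\<close>, which the
  closed form \<open>k / (n - k) \<cdot> C(n - k, l) \<cdot> C(n - 1, l - 1)\<close> (for \<open>k < n\<close>) solves by telescoping.
  Summing it over \<open>l\<close> (Vandermonde) gives (ii), over \<open>k\<close> the Narayana numbers (iii), and
  summing those gives the Catalan numbers (i).
\<close>

section \<open>The closed form of the joint distribution\<close>

lemma real_Suc_times_choose_Suc:
  "real (Suc l) * real (a choose Suc l) = (real a - real l) * real (a choose l)"
proof -
  have "Suc l * (Suc a choose Suc l) = Suc a * (a choose l)"
    by (rule Suc_times_binomial)
  then have "real (Suc l) * (real (a choose l) + real (a choose Suc l)) = real (Suc a) * real (a choose l)"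
    by (metis binomial_Suc_Suc of_nat_add of_nat_mult)
  then show ?thesis by (simp add: algebra_simps)
qed

definition ex_int_number :: "nat \<Rightarrow> nat \<Rightarrow> nat \<Rightarrow> real" where
  "ex_int_number n k l =
     (if k = 0 \<or> n < k then 0
      else if k = n then (if l = 0 then 1 else 0)
      else if l = 0 then 0
      else real k / real (n - k) * real ((n - k) choose l) * real ((n - 1) choose (l - 1)))"

lemma ex_int_number_less:
  assumes "k < n"
  shows "ex_int_number n k l
    = real k / real (n - k) * real ((n - k) choose l) * real (if l = 0 then 0 else (n - 1) choose (l - 1))"
  using assms unfolding ex_int_number_def by auto

lemma ex_int_number_step:
  assumes "n \<ge> 1" "j \<ge> 1"
  shows "ex_int_number n j l
       = (ex_int_number (n + 1) j (l + 1) - ex_int_number n (j - 1) (l + 1))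
         - (ex_int_number (n + 1) (j + 1) (l + 1) - ex_int_number n j (l + 1))"
proof -
  consider "n + 1 < j" | "j = n + 1" | "j = n" | "j < n" by linarith
  then show ?thesis
  proof cases
    case 3
    then show ?thesis using assms by (cases "n = 1"; cases l) (auto simp: ex_int_number_def)
  next
    case 4
    define a where "a = n - j"
    have a: "a \<ge> 1" "n = a + j" using 4 by (auto simp: a_def)
    define x where "x = real (a choose l)"
    define y where "y = real (a choose (l + 1))"
    define u where "u = real (if l = 0 then 0 else (n - 1) choose (l - 1))"
    define v where "v = real ((n - 1) choose l)"
    have choose_n: "real (n choose l) = u + v"
    proof -
      obtain n' where "n = Suc n'" using assms(1) by (cases n) auto
      then show ?thesis by (cases l) (simp_all add: u_def v_def)
    qed
    have e1: "ex_int_number (n + 1) j (l + 1) = real j / (real a + 1) * (x + y) * (u + v)"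
      using ex_int_number_less[of j "n + 1" "l + 1"] a choose_n by (simp add: x_def y_def)
    have e2: "ex_int_number n (j - 1) (l + 1) = (real j - 1) / (real a + 1) * (x + y) * v"
      using ex_int_number_less[of "j - 1" n "l + 1"] a assms
      by (cases "j = 1") (auto simp: x_def y_def v_def ex_int_number_def)
    have e3: "ex_int_number n j l = real j / real a * x * u"
      using ex_int_number_less[of j n l] 4 by (simp add: a_def x_def u_def)
    have e4: "ex_int_number (n + 1) (j + 1) (l + 1) = (real j + 1) / real a * y * (u + v)"
      using ex_int_number_less[of "j + 1" "n + 1" "l + 1"] a choose_n by (simp add: y_def)
    have e5: "ex_int_number n j (l + 1) = real j / real a * y * v"
      using ex_int_number_less[of j n "l + 1"] 4 by (simp add: a_def y_def v_def)
    have r1: "(real l + 1) * y = (real a - real l) * x"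
      using real_Suc_times_choose_Suc[of l a] by (simp add: x_def y_def add.commute)
    have r2: "real l * v = (real a + real j - real l) * u"
      using real_Suc_times_choose_Suc[of "l - 1" "n - 1"] a by (cases l) (auto simp: u_def v_def)
    \<comment> \<open>clearing denominators, the identity is a linear combination of r1 and r2\<close>
    have "(real l + 1) * (real a * (x + y) * (real j * u + v)
            - (real a + 1) * (real j * x * u + (real j + 1) * y * u + y * v))
          = (v + (real a + real j + 1) * u) * ((real a - real l) * x - (real l + 1) * y)
            + x * (real a + 1) * (real l * v - (real a + real j - real l) * u)"
      by (simp add: algebra_simps)
    then have "real a * (x + y) * (real j * u + v)
               = (real a + 1) * (real j * x * u + (real j + 1) * y * u + y * v)"
      using r1 r2 by (simp add: add_nonneg_eq_0_iff)
    then have key: "(x + y) * (real j * u + v) / (real a + 1)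
                    = (real j * x * u + (real j + 1) * y * u + y * v) / real a"
      using a by (simp add: field_simps)
    have "ex_int_number (n + 1) j (l + 1) - ex_int_number n (j - 1) (l + 1)
          = (x + y) * (real j * u + v) / (real a + 1)"
      unfolding e1 e2 by (simp add: divide_simps) (simp add: algebra_simps)
    also have "\<dots> = ex_int_number n j l + (ex_int_number (n + 1) (j + 1) (l + 1) - ex_int_number n j (l + 1))"
      unfolding key e3 e4 e5 using a by (simp add: divide_simps) (simp add: algebra_simps)
    finally show ?thesis by simp
  qed (simp_all add: ex_int_number_def)
qed

lemma ex_int_number_rec_0:
  "1 \<le> m \<Longrightarrow> 1 \<le> k \<Longrightarrow> ex_int_number (m + 1) k 0 = ex_int_number m (k - 1) 0"
  unfolding ex_int_number_def by auto

lemma ex_int_number_rec: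
  assumes "1 \<le> m" "1 \<le> k"
  shows "ex_int_number (m + 1) k (l + 1) = ex_int_number m (k - 1) (l + 1) + (\<Sum>i=k..m. ex_int_number m i l)"
proof (cases "k \<le> m + 1")
  case True
  define D where "D i = ex_int_number m (i - 1) (l + 1) - ex_int_number (m + 1) i (l + 1)" for i
  have "(\<Sum>i=k..m. ex_int_number m i l) = (\<Sum>i=k..m. D (Suc i) - D i)"
    using ex_int_number_step[OF assms(1), of _ l] assms(2) by (intro sum.cong) (auto simp: D_def)
  also have "\<dots> = D (Suc m) - D k"
    using True by (intro sum_Suc_diff) simp
  finally show ?thesis by (simp add: D_def ex_int_number_def)
next
  case False
  then show ?thesis by (simp add: ex_int_number_def)
qed

lemma sum_ex_int_number_narayana:
  assumes "1 \<le> n"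
  shows "(\<Sum>k=1..n. ex_int_number n k l) = 1 / real n * real (n choose (l + 1)) * real (n choose l)"
  using ex_int_number_rec[OF assms order.refl, of l] assms by (simp add: ex_int_number_def)

lemma sum_ex_int_number:
  assumes "1 \<le> k" "k \<le> n"
  shows "(\<Sum>l\<le>n. ex_int_number n k l) = real ((2*n - k) choose n) * real k / real (2*n - k)"
proof (cases "k = n")
  case True
  then show ?thesis using assms by (simp add: ex_int_number_def mult_2)
next
  case False
  have "(\<Sum>l\<le>n. ex_int_number n k l)
        = real k / real (n - k) * (\<Sum>l\<le>n. real (((n - k) choose l) * ((n - 1) choose (n - l))))"
    unfolding sum_distrib_left
  proof (rule sum.cong[OF refl])
    fix l assume "l \<in> {..n}"
    then show "ex_int_number n k l = real k / real (n - k) * real (((n - k) choose l) * ((n - 1) choose (n - l)))"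
      using False assms binomial_symmetric[of "l - 1" "n - 1"]
      by (cases l) (auto simp: ex_int_number_def Suc_diff_le)
  qed
  also have "\<dots> = real k / real (n - k) * real ((2*n - k - 1) choose n)"
    using vandermonde[of "n - k" "n - 1" n] assms
    by (simp only: of_nat_sum[symmetric]) (simp add: mult_2)
  also have "\<dots> = real ((2*n - k) choose n) * real k / real (2*n - k)"
  proof -
    define A where "A = real ((2*n - k) choose n)"
    define B where "B = real ((2*n - k - 1) choose n)"
    define c where "c = real (n - k)"
    define d where "d = real (2*n - k)"
    have "(n - k) * ((2*n - k) choose n) = (2*n - k) * ((2*n - k - 1) choose n)"
      using binomial_absorb_comp[of "2*n - k" n] assms by (simp add: algebra_simps)
    then have "c * A = d * B"
      unfolding A_def B_def c_def d_def by (metis of_nat_mult)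
    moreover have "c \<noteq> 0" "d \<noteq> 0" using False assms by (auto simp: c_def d_def)
    ultimately have "B / c = A / d" by (simp add: frac_eq_eq mult.commute)
    then show ?thesis unfolding A_def B_def c_def d_def by (metis times_divide_eq_left times_divide_eq_right mult.commute)
  qed
  finally show ?thesis .
qed

lemma sum_narayana:
  fixes n :: nat assumes "n \<ge> 1"
  shows "(\<Sum>l\<le>n - 1. 1 / real n * real (n choose (l + 1)) * real (n choose l))
         = 1 / (real n + 1) * real ((2*n) choose n)"
proof -
  have "(\<Sum>l\<le>n - 1. (n choose l) * (n choose (n - 1 - l))) = (2*n) choose (n - 1)"
    using vandermonde[of n n "n - 1"] by (simp add: mult_2)
  moreover have "n choose (n - 1 - l) = n choose (l + 1)" if "l \<le> n - 1" for l
    using binomial_symmetric[of "l + 1" n] that assms by (simp add: algebra_simps)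
  ultimately have "(\<Sum>l\<le>n - 1. (n choose (l + 1)) * (n choose l)) = (2*n) choose (n - 1)"
    by (simp add: mult.commute)
  then have "(\<Sum>l\<le>n - 1. 1 / real n * real (n choose (l + 1)) * real (n choose l))
             = real ((2*n) choose (n - 1)) / real n"
    by (simp add: sum_divide_distrib[symmetric] flip: of_nat_mult of_nat_sum)
  also have "\<dots> = 1 / (real n + 1) * real ((2*n) choose n)"
  proof -
    have "n * ((2*n) choose n) = (n + 1) * ((2*n) choose (n - 1))"
      using binomial_absorb_comp[of "2*n" "n - 1"] binomial_absorption[of "n - 1" "2*n"] assms
      by (simp add: Suc_diff_le)
    then have "real n * real ((2*n) choose n) = real (n + 1) * real ((2*n) choose (n - 1))"
      by (metis of_nat_mult)
    then have "real ((2*n) choose (n - 1)) / real n = real ((2*n) choose n) / real (n + 1)"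
      using assms by (simp add: frac_eq_eq mult.commute del: of_nat_add)
    then show ?thesis by simp
  qed
  finally show ?thesis .
qed

section \<open>Link patterns as arc diagrams\<close>

text \<open>
  A link pattern of \<open>m\<close> strands drawn on the positions \<open>1, \<dots>, 2m\<close> of the exposure order
  (point \<open>0\<close> sits at position \<open>2m\<close>), each link being an arc \<open>(a, b)\<close> with \<open>a < b\<close>.
\<close>

definition nc_matching :: "nat \<Rightarrow> (nat \<times> nat) set \<Rightarrow> bool" where
  "nc_matching m R \<longleftrightarrow>
     (\<forall>a b. (a, b) \<in> R \<longrightarrow> 1 \<le> a \<and> a < b \<and> b \<le> 2*m) \<and>
     (\<forall>x. 1 \<le> x \<longrightarrow> x \<le> 2*m \<longrightarrow> (\<exists>y. (x, y) \<in> R \<or> (y, x) \<in> R)) \<and>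
     (\<forall>a b c d. (a, b) \<in> R \<longrightarrow> (c, d) \<in> R \<longrightarrow> (a = c \<or> a = d \<or> b = c \<or> b = d) \<longrightarrow> a = c \<and> b = d) \<and>
     (\<forall>a b c d. (a, b) \<in> R \<longrightarrow> (c, d) \<in> R \<longrightarrow> \<not> (a < c \<and> c < b \<and> b < d))"

lemma nc_matching_arc: "nc_matching m R \<Longrightarrow> (a, b) \<in> R \<Longrightarrow> 1 \<le> a \<and> a < b \<and> b \<le> 2*m"
  unfolding nc_matching_def by blast

lemma nc_matching_covers:
  "nc_matching m R \<Longrightarrow> 1 \<le> x \<Longrightarrow> x \<le> 2*m \<Longrightarrow> \<exists>y. (x, y) \<in> R \<or> (y, x) \<in> R"
  unfolding nc_matching_def by blast

lemma nc_matching_arc_eq: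
  "nc_matching m R \<Longrightarrow> (a, b) \<in> R \<Longrightarrow> (c, d) \<in> R \<Longrightarrow> a = c \<or> a = d \<or> b = c \<or> b = d \<Longrightarrow> a = c \<and> b = d"
  unfolding nc_matching_def by blast

lemma nc_matching_noncrossing:
  "nc_matching m R \<Longrightarrow> (a, b) \<in> R \<Longrightarrow> (c, d) \<in> R \<Longrightarrow> a < c \<Longrightarrow> c < b \<Longrightarrow> b < d \<Longrightarrow> False"
  unfolding nc_matching_def by blast

lemma nc_matching_finite:
  assumes "nc_matching m R"
  shows "finite R"
proof (rule finite_subset)
  show "R \<subseteq> {0..2*m} \<times> {0..2*m}"
    using nc_matching_arc[OF assms] by fastforce
qed simp

lemma nc_matchingI:
  assumes "\<And>a b. (a,b)\<in>R \<Longrightarrow> 1 \<le> a \<and> a < b \<and> b \<le> 2*m"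
    and "\<And>x. 1 \<le> x \<Longrightarrow> x \<le> 2*m \<Longrightarrow> \<exists>y. (x,y)\<in>R \<or> (y,x)\<in>R"
    and "\<And>a b c d. (a,b)\<in>R \<Longrightarrow> (c,d)\<in>R \<Longrightarrow> a=c \<or> a=d \<or> b=c \<or> b=d \<Longrightarrow> a=c \<and> b=d"
    and "\<And>a b c d. (a,b)\<in>R \<Longrightarrow> (c,d)\<in>R \<Longrightarrow> a<c \<Longrightarrow> c<b \<Longrightarrow> b<d \<Longrightarrow> False"
  shows "nc_matching m R"
  unfolding nc_matching_def using assms by blast

definition outer_arcs :: "(nat \<times> nat) set \<Rightarrow> (nat \<times> nat) set" where
  "outer_arcs R = {p\<in>R. \<not>(\<exists>c d. (c,d)\<in>R \<and> c < fst p \<and> snd p < d)}"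

definition outer_rank :: "(nat \<times> nat) set \<Rightarrow> nat \<Rightarrow> nat" where
  "outer_rank R b = card {p\<in>outer_arcs R. snd p < b}"

definition arc_plus :: "nat \<Rightarrow> (nat \<times> nat) set \<Rightarrow> (nat \<times> nat) set" where
  "arc_plus m R = insert (2*m+1, 2*m+2) R"

text \<open>
  At positions, \<open>e\<^sub>2\<^sub>m\<^sub>+\<^sub>1\<close> followed by removing the link \<open>{2m + 1, 0}\<close>: the arc
  \<open>(2m + 1, 2m + 2)\<close> is dropped, or the arcs ending at \<open>2m + 1\<close> and \<open>2m + 2\<close> are merged.
\<close>

definition arc_parent :: "nat \<Rightarrow> (nat \<times> nat) set \<Rightarrow> (nat \<times> nat) set" where
  "arc_parent m S = (if (2*m+1, 2*m+2) \<in> S then S - {(2*m+1, 2*m+2)} else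
     (let a = (THE a. (a, 2*m+1) \<in> S); b = (THE b. (b, 2*m+2) \<in> S) in
       (S - {(a, 2*m+1), (b, 2*m+2)}) \<union> {(b, a)}))"

lemma finite_outer_arcs: "nc_matching m R \<Longrightarrow> finite (outer_arcs R)"
  unfolding outer_arcs_def using nc_matching_finite by auto

lemma last_arcs:
  assumes w: "nc_matching (Suc m) S" and np: "(2*m+1, 2*m+2) \<notin> S"
  shows "\<exists>a b. (a, 2*m+1) \<in> S \<and> (b, 2*m+2) \<in> S \<and> b < a \<and> a \<le> 2*m \<and> 1 \<le> b"
proof -
  obtain y where y: "(2*m+1, y) \<in> S \<or> (y, 2*m+1) \<in> S" using nc_matching_covers[OF w, of "2*m+1"] by auto
  have "(2*m+1, y) \<notin> S"
  proof
    assume "(2*m+1, y) \<in> S"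
    with nc_matching_arc[OF w this] have "y = 2*m+2" by simp
    with np \<open>(2*m+1, y) \<in> S\<close> show False by simp
  qed
  with y have a: "(y, 2*m+1) \<in> S" by simp
  obtain z where z: "(2*m+2, z) \<in> S \<or> (z, 2*m+2) \<in> S" using nc_matching_covers[OF w, of "2*m+2"] by auto
  have "(2*m+2, z) \<notin> S"
  proof
    assume "(2*m+2, z) \<in> S"
    with nc_matching_arc[OF w this] have "2*m+2 < z" "z \<le> 2*m+2" by auto
    then show False by simp
  qed
  with z have b: "(z, 2*m+2) \<in> S" by simp
  have "z \<noteq> y" using nc_matching_arc_eq[OF w a b] by auto
  moreover have "\<not> y < z"
  proof
    assume yz: "y < z"
    have "z \<noteq> 2*m+1" using np b by auto
    then have "z < 2*m+1" using nc_matching_arc[OF w b] by simp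
    then show False using nc_matching_noncrossing[OF w a b] yz by simp
  qed
  ultimately have "z < y" by simp
  then show ?thesis using a b nc_matching_arc[OF w a] nc_matching_arc[OF w b] by (intro exI[of _ y] exI[of _ z]) auto
qed

lemma arc_parent_split:
  assumes w: "nc_matching (Suc m) S" and np: "(2*m+1, 2*m+2) \<notin> S"
    and a: "(a, 2*m+1) \<in> S" and b: "(b, 2*m+2) \<in> S"
  shows "arc_parent m S = (S - {(a, 2*m+1), (b, 2*m+2)}) \<union> {(b, a)}"
proof -
  have ta: "(THE a. (a, 2*m+1) \<in> S) = a"
  proof (rule the_equality)
    show "(a, 2*m+1) \<in> S" using a .
    fix x assume "(x, 2*m+1) \<in> S" then show "x = a" using nc_matching_arc_eq[OF w _ a, of x "2*m+1"] by simp
  qed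
  have tb: "(THE b. (b, 2*m+2) \<in> S) = b"
  proof (rule the_equality)
    show "(b, 2*m+2) \<in> S" using b .
    fix x assume "(x, 2*m+2) \<in> S" then show "x = b" using nc_matching_arc_eq[OF w _ b, of x "2*m+2"] by simp
  qed
  show ?thesis unfolding arc_parent_def using np ta tb by (simp add: Let_def)
qed

lemma arc_parent_last:
  assumes w: "nc_matching (Suc m) S" and p: "(2*m+1, 2*m+2) \<in> S"
  shows "arc_parent m S = S - {(2*m+1, 2*m+2)}"
  unfolding arc_parent_def using p by simp

lemma nc_matching_merge_last_arcs:
  assumes w: "nc_matching (Suc m) S"
    and a: "(a, 2*m+1) \<in> S" and b: "(b, 2*m+2) \<in> S" and ba: "b < a"
  shows "nc_matching m ((S - {(a, 2*m+1), (b, 2*m+2)}) \<union> {(b, a)})"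
proof -
  have a2: "a \<le> 2*m" and b1: "1 \<le> b"
    using nc_matching_arc[OF w a] nc_matching_arc[OF w b] ba by auto
  let ?R = "(S - {(a, 2*m+1), (b, 2*m+2)}) \<union> {(b, a)}"
  have old: "(x,y) \<in> S" "y \<le> 2*m" "x \<noteq> a" "x \<noteq> b" "y \<noteq> a" "y \<noteq> b"
    if "(x,y) \<in> S - {(a, 2*m+1), (b, 2*m+2)}" for x y
  proof -
    show "(x,y) \<in> S" using that by simp
    have r: "y \<le> 2*m+2" using nc_matching_arc[OF w, of x y] that by simp
    have "y \<noteq> 2*m+1" using nc_matching_arc_eq[OF w a, of x y] that by auto
    moreover have "y \<noteq> 2*m+2" using nc_matching_arc_eq[OF w b, of x y] that by auto
    ultimately show "y \<le> 2*m" using r by simp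
    show "x \<noteq> a" "y \<noteq> a" using nc_matching_arc_eq[OF w a, of x y] that by auto
    show "x \<noteq> b" "y \<noteq> b" using nc_matching_arc_eq[OF w b, of x y] that by auto
  qed
  show ?thesis
  proof (rule nc_matchingI)
    fix x y assume xy: "(x,y) \<in> ?R"
    show "1 \<le> x \<and> x < y \<and> y \<le> 2*m"
    proof (cases "(x,y) = (b,a)")
      case True then show ?thesis using ba a2 b1 by simp
    next
      case False
      then have o: "(x,y) \<in> S - {(a, 2*m+1), (b, 2*m+2)}" using xy by blast
      show ?thesis using nc_matching_arc[OF w, of x y] old(1,2)[OF o] by simp
    qed
  next
    fix x assume x1: "1 \<le> x" and x2: "x \<le> 2*m"
    then obtain y where y: "(x,y)\<in>S \<or> (y,x)\<in>S" using nc_matching_covers[OF w, of x] by auto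
    show "\<exists>y. (x, y) \<in> ?R \<or> (y, x) \<in> ?R"
    proof (cases "x = a \<or> x = b")
      case True then show ?thesis by blast
    next
      case False
      then have "(x,y) \<in> S - {(a, 2*m+1), (b, 2*m+2)} \<or> (y,x) \<in> S - {(a, 2*m+1), (b, 2*m+2)}"
        using y x2 by auto
      then show ?thesis by blast
    qed
  next
    fix x y u v assume xy: "(x,y) \<in> ?R" and uv: "(u,v) \<in> ?R" and sh: "x = u \<or> x = v \<or> y = u \<or> y = v"
    show "x = u \<and> y = v"
    proof (cases "(x,y) = (b,a)")
      case True
      show ?thesis
      proof (cases "(u,v) = (b,a)")
        case True with \<open>(x,y) = (b,a)\<close> show ?thesis by simp
      next
        case False
        then have "(u,v) \<in> S - {(a, 2*m+1), (b, 2*m+2)}" using uv by blast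
        from old[OF this] \<open>(x,y) = (b,a)\<close> sh show ?thesis by auto
      qed
    next
      case False
      then have o1: "(x,y) \<in> S - {(a, 2*m+1), (b, 2*m+2)}" using xy by blast
      show ?thesis
      proof (cases "(u,v) = (b,a)")
        case True
        from old[OF o1] True sh show ?thesis by auto
      next
        case False
        then have "(u,v) \<in> S - {(a, 2*m+1), (b, 2*m+2)}" using uv by blast
        then show ?thesis using o1 nc_matching_arc_eq[OF w, of x y u v] sh by auto
      qed
    qed
  next
    fix x y u v assume xy: "(x,y) \<in> ?R" and uv: "(u,v) \<in> ?R" and c1: "x < u" and c2: "u < y" and c3: "y < v"
    have c: "x < u \<and> u < y \<and> y < v" using c1 c2 c3 by simp
      show False
      proof (cases "(x,y) = (b,a)")
        case True
        then have "(u,v) \<noteq> (b,a)" using c by auto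
        then have o2: "(u,v) \<in> S - {(a, 2*m+1), (b, 2*m+2)}" using uv by blast
        have "v < 2*m+1" using old(2)[OF o2] by simp
        then show False using nc_matching_noncrossing[OF w, of u v a "2*m+1"] o2 a c True by auto
      next
        case False
        then have o1: "(x,y) \<in> S - {(a, 2*m+1), (b, 2*m+2)}" using xy by blast
        show False
        proof (cases "(u,v) = (b,a)")
          case True
          have "y < 2*m+2" using old(2)[OF o1] by simp
          then show False using nc_matching_noncrossing[OF w, of x y b "2*m+2"] o1 b c True by auto
        next
          case False
          then have "(u,v) \<in> S - {(a, 2*m+1), (b, 2*m+2)}" using uv by blast
          then show False using o1 nc_matching_noncrossing[OF w, of x y u v] c by auto
        qed
      qed
  qed
qed

lemma nc_matching_arc_parent:
  assumes w: "nc_matching (Suc m) S"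
  shows "nc_matching m (arc_parent m S)"
proof (cases "(2*m+1, 2*m+2) \<in> S")
  case True
  note arc = nc_matching_arc[OF w] and eq = nc_matching_arc_eq[OF w]
  show ?thesis unfolding arc_parent_last[OF w True]
  proof (rule nc_matchingI)
    fix x y assume "(x,y) \<in> S - {(2*m+1, 2*m+2)}"
    then show "1 \<le> x \<and> x < y \<and> y \<le> 2*m"
      using arc[of x y] eq[OF True, of x y] by fastforce
  next
    fix x assume "1 \<le> x" "x \<le> 2*m"
    then show "\<exists>y. (x,y) \<in> S - {(2*m+1, 2*m+2)} \<or> (y,x) \<in> S - {(2*m+1, 2*m+2)}"
      using nc_matching_covers[OF w, of x] by auto
  next
    fix x y u v assume "(x,y) \<in> S - {(2*m+1, 2*m+2)}" "(u,v) \<in> S - {(2*m+1, 2*m+2)}"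
      "x = u \<or> x = v \<or> y = u \<or> y = v"
    then show "x = u \<and> y = v" using eq[of x y u v] by blast
  next
    fix x y u v assume "(x,y) \<in> S - {(2*m+1, 2*m+2)}" "(u,v) \<in> S - {(2*m+1, 2*m+2)}"
      "x < u" "u < y" "y < v"
    then show False using nc_matching_noncrossing[OF w, of x y u v] by blast
  qed
next
  case False
  obtain a b where a: "(a, 2*m+1) \<in> S" and b: "(b, 2*m+2) \<in> S" and ba: "b < a"
    using last_arcs[OF w False] by blast
  show ?thesis
    unfolding arc_parent_split[OF w False a b] by (rule nc_matching_merge_last_arcs[OF w a b ba])
qed

lemma nc_matching_arc_plus:
  assumes w: "nc_matching m R"
  shows "nc_matching (Suc m) (arc_plus m R)"
  unfolding arc_plus_def
proof (rule nc_matchingI)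
  fix a b assume "(a,b) \<in> insert (2*m+1, 2*m+2) R"
  then show "1 \<le> a \<and> a < b \<and> b \<le> 2 * Suc m" using nc_matching_arc[OF w, of a b] by auto
next
  fix x assume "1 \<le> x" "x \<le> 2 * Suc m"
  then consider "x \<le> 2*m" | "x = 2*m+1" | "x = 2*m+2" by fastforce
  then show "\<exists>y. (x, y) \<in> insert (2*m+1, 2*m+2) R \<or> (y, x) \<in> insert (2*m+1, 2*m+2) R"
    using nc_matching_covers[OF w \<open>1 \<le> x\<close>] by cases auto
next
  fix a b c d assume "(a,b) \<in> insert (2*m+1, 2*m+2) R" "(c,d) \<in> insert (2*m+1, 2*m+2) R"
    "a = c \<or> a = d \<or> b = c \<or> b = d"
  then show "a = c \<and> b = d"
    using nc_matching_arc[OF w, of a b] nc_matching_arc[OF w, of c d] nc_matching_arc_eq[OF w, of a b c d]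
    by auto
next
  fix a b c d assume "(a,b) \<in> insert (2*m+1, 2*m+2) R" "(c,d) \<in> insert (2*m+1, 2*m+2) R"
    "a < c" "c < b" "b < d"
  then show False
    using nc_matching_arc[OF w, of a b] nc_matching_arc[OF w, of c d] nc_matching_noncrossing[OF w, of a b c d]
    by auto
qed

lemma arc_parent_arc_plus:
  assumes w: "nc_matching m R"
  shows "arc_parent m (arc_plus m R) = R"
  using nc_matching_arc[OF w, of "2*m+1" "2*m+2"] unfolding arc_parent_def arc_plus_def by auto

lemma card_outer_arcs_arc_plus:
  assumes w: "nc_matching m R"
  shows "card (outer_arcs (arc_plus m R)) = Suc (card (outer_arcs R))"
proof -
  have "outer_arcs (arc_plus m R) = insert (2*m+1, 2*m+2) (outer_arcs R)"
    using nc_matching_arc[OF w] unfolding outer_arcs_def arc_plus_def by fastforce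
  moreover have "(2*m+1, 2*m+2) \<notin> outer_arcs R"
    using nc_matching_arc[OF w, of "2*m+1" "2*m+2"] unfolding outer_arcs_def by auto
  ultimately show ?thesis using finite_outer_arcs[OF w] by simp
qed

lemma outer_arcs_arc_parent_merged:
  assumes w: "nc_matching (Suc m) S" and np: "(2*m+1, 2*m+2) \<notin> S"
    and a: "(a, 2*m+1) \<in> S" and b: "(b, 2*m+2) \<in> S"
  shows "(b, a) \<in> outer_arcs (arc_parent m S)"
proof -
  have pe: "arc_parent m S = (S - {(a, 2*m+1), (b, 2*m+2)}) \<union> {(b, a)}" using arc_parent_split[OF w np a b] .
  have wR: "nc_matching m (arc_parent m S)" using nc_matching_arc_parent[OF w] .
  show ?thesis unfolding outer_arcs_def
  proof (safe)
    show "(b,a) \<in> arc_parent m S" using pe by simp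
  next
    fix c d assume cd: "(c,d) \<in> arc_parent m S" and c: "c < fst (b,a)" and d: "snd (b,a) < d"
    then have "(c,d) \<noteq> (b,a)" by auto
    then have cdS: "(c,d) \<in> S" using cd unfolding pe by blast
    have "d \<le> 2*m" using nc_matching_arc[OF wR cd] by simp
    have "b < a" using nc_matching_arc[OF wR, of b a] pe by simp
    then show False using nc_matching_noncrossing[OF w cdS b] c d nc_matching_arc[OF wR cd] by simp
  qed
qed

lemma outer_arcs_split:
  assumes w: "nc_matching (Suc m) S" and np: "(2*m+1, 2*m+2) \<notin> S"
    and a: "(a, 2*m+1) \<in> S" and b: "(b, 2*m+2) \<in> S" and ba: "b < a"
  shows "outer_arcs S = insert (b, 2*m+2) {p\<in>outer_arcs (arc_parent m S). snd p < b}"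
proof -
  have pe: "arc_parent m S = (S - {(a, 2*m+1), (b, 2*m+2)}) \<union> {(b, a)}" using arc_parent_split[OF w np a b] .
  have wR: "nc_matching m (arc_parent m S)" using nc_matching_arc_parent[OF w] .
  show ?thesis
  proof (rule equalityI; rule subsetI)
    fix p assume "p \<in> outer_arcs S"
    then obtain x y where pxy: "p = (x,y)" and xy: "(x,y) \<in> outer_arcs S" by (cases p) auto
    show "p \<in> insert (b, 2*m+2) {p\<in>outer_arcs (arc_parent m S). snd p < b}"
    proof (cases "(x,y) \<in> {p\<in>outer_arcs (arc_parent m S). snd p < b}")
      case True then show ?thesis using pxy by simp
    next
      case False
      note ne = False
    have xyS: "(x,y) \<in> S" and no: "\<And>c d. (c,d) \<in> S \<Longrightarrow> c < x \<Longrightarrow> y < d \<Longrightarrow> False"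
      using xy unfolding outer_arcs_def by auto
      have "(x,y) = (b, 2*m+2)"
      proof (rule ccontr)
        assume nb: "(x,y) \<noteq> (b, 2*m+2)"
        have na: "(x,y) \<noteq> (a, 2*m+1)"
        proof
          assume "(x,y) = (a, 2*m+1)"
          then show False using no[OF b] ba by auto
        qed
        have xyR: "(x,y) \<in> arc_parent m S" unfolding pe using xyS nb na by blast
        have yr: "y \<le> 2*m" using nc_matching_arc[OF wR xyR] by blast
        have xb: "x \<noteq> b"
        proof
          assume "x = b" then show False using nc_matching_arc_eq[OF w xyS b] nb by simp
        qed
        have yb: "y \<noteq> b"
        proof
          assume "y = b" then show False using nc_matching_arc_eq[OF w xyS b] nb by simp
        qed
        have "\<not> b < x" using no[OF b] yr by auto
        then have "x < b" using xb by simp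
        moreover have "\<not> b < y" using nc_matching_noncrossing[OF w xyS b] \<open>x < b\<close> yr by auto
        ultimately have yltb: "y < b" using yb by simp
        have "(x,y) \<in> outer_arcs (arc_parent m S)" unfolding outer_arcs_def
        proof (safe)
          show "(x,y) \<in> arc_parent m S" using xyR .
        next
          fix c d assume cd: "(c,d) \<in> arc_parent m S" "c < fst (x,y)" "snd (x,y) < d"
          show False
          proof (cases "(c,d) = (b,a)")
            case True then show False using cd \<open>x < b\<close> by simp
          next
            case False then have "(c,d) \<in> S" using cd unfolding pe by blast
            then show False using no cd by simp
          qed
        qed
        then show False using ne yltb by simp
      qed
      then show ?thesis using pxy by simp
    qed
  next
    fix p assume "p \<in> insert (b, 2*m+2) {p\<in>outer_arcs (arc_parent m S). snd p < b}"
    then consider "p = (b, 2*m+2)" | "p \<in> outer_arcs (arc_parent m S)" "snd p < b" by auto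
    then show "p \<in> outer_arcs S"
    proof cases
      case 1
      have "\<not>(\<exists>c d. (c,d)\<in>S \<and> c<b \<and> 2*m+2<d)" using nc_matching_arc[OF w] by fastforce
      then show ?thesis unfolding outer_arcs_def using b 1 by simp
    next
      case 2
    obtain x y where pxy: "p = (x,y)" by (cases p) auto
    have xy: "(x,y) \<in> outer_arcs (arc_parent m S)" and yb: "snd (x,y) < b" using 2 pxy by auto
    have xyR: "(x,y) \<in> arc_parent m S" and no: "\<And>c d. (c,d) \<in> arc_parent m S \<Longrightarrow> c < x \<Longrightarrow> y < d \<Longrightarrow> False"
      using xy unfolding outer_arcs_def by auto
    have "(x,y) \<noteq> (b,a)" using yb ba by auto
    then have xyS: "(x,y) \<in> S" using xyR unfolding pe by blast
    have xy': "x < y" using nc_matching_arc[OF w xyS] by simp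
    have "(x,y) \<in> outer_arcs S" unfolding outer_arcs_def
    proof (safe)
      show "(x,y) \<in> S" using xyS .
    next
      fix c d assume cd: "(c,d) \<in> S" "c < fst (x,y)" "snd (x,y) < d"
      show False
      proof (cases "(c,d) = (a, 2*m+1) \<or> (c,d) = (b, 2*m+2)")
        case True then show False using cd yb ba xy' by auto
      next
        case False then have "(c,d) \<in> arc_parent m S" using cd unfolding pe by blast
        then show False using no cd by simp
      qed
    qed
    then show ?thesis using pxy by simp
    qed
  qed
qed

lemma card_outer_arcs_split:
  assumes w: "nc_matching (Suc m) S" and np: "(2*m+1, 2*m+2) \<notin> S"
    and a: "(a, 2*m+1) \<in> S" and b: "(b, 2*m+2) \<in> S" and ba: "b < a"
  shows "card (outer_arcs S) = Suc (outer_rank (arc_parent m S) b)"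
proof -
  have wR: "nc_matching m (arc_parent m S)" using nc_matching_arc_parent[OF w] .
  have f: "finite {p\<in>outer_arcs (arc_parent m S). snd p < b}" using finite_outer_arcs[OF wR] by simp
  have "(b, 2*m+2) \<notin> {p\<in>outer_arcs (arc_parent m S). snd p < b}" using nc_matching_arc[OF w b] by auto
  then show ?thesis unfolding outer_rank_def outer_arcs_split[OF assms] using f by simp
qed

lemma outer_rank_less:
  assumes w: "nc_matching m R" and p: "(b,a) \<in> outer_arcs R"
  shows "outer_rank R b < card (outer_arcs R)"
proof -
  have ba: "b < a" using p nc_matching_arc[OF w, of b a] unfolding outer_arcs_def by auto
  have "(b,a) \<notin> {p\<in>outer_arcs R. snd p < b}" using ba by auto
  then have "{p\<in>outer_arcs R. snd p < b} \<subset> outer_arcs R"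
    using p by blast
  then show ?thesis unfolding outer_rank_def using finite_outer_arcs[OF w] psubset_card_mono by blast
qed

lemma outer_rank_strict_mono:
  assumes w: "nc_matching m R" and p1: "(b1,a1) \<in> outer_arcs R" and p2: "(b2,a2) \<in> outer_arcs R" and lt: "b1 < b2"
  shows "outer_rank R b1 < outer_rank R b2"
proof -
  have r1: "(b1,a1) \<in> R" and r2: "(b2,a2) \<in> R" using p1 p2 unfolding outer_arcs_def by auto
  have "a1 < b2"
  proof (rule ccontr)
    assume "\<not> a1 < b2"
    moreover have "a1 \<noteq> b2" using nc_matching_arc_eq[OF w r1 r2] lt by auto
    ultimately have "b2 < a1" by simp
    have "a2 \<noteq> a1" using nc_matching_arc_eq[OF w r1 r2] lt by auto
    moreover have "\<not> a2 < a1" using p2 r1 lt unfolding outer_arcs_def by auto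
    moreover have "\<not> a1 < a2" using nc_matching_noncrossing[OF w r1 r2] lt \<open>b2 < a1\<close> by auto
    ultimately show False by simp
  qed
  have "{p\<in>outer_arcs R. snd p < b1} \<subset> {p\<in>outer_arcs R. snd p < b2}"
  proof
    show "{p\<in>outer_arcs R. snd p < b1} \<subseteq> {p\<in>outer_arcs R. snd p < b2}" using lt by auto
    have "(b1,a1) \<in> {p\<in>outer_arcs R. snd p < b2}" using p1 \<open>a1 < b2\<close> by simp
    moreover have "(b1,a1) \<notin> {p\<in>outer_arcs R. snd p < b1}" using nc_matching_arc[OF w r1] by simp
    ultimately show "{p\<in>outer_arcs R. snd p < b1} \<noteq> {p\<in>outer_arcs R. snd p < b2}" by blast
  qed
  then show ?thesis unfolding outer_rank_def using finite_outer_arcs[OF w] psubset_card_mono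
    by (metis (no_types, lifting) finite_subset mem_Collect_eq subsetI)
qed

lemma outer_rank_inj:
  assumes w: "nc_matching m R" and p1: "(b1,a1) \<in> outer_arcs R" and p2: "(b2,a2) \<in> outer_arcs R" and eq: "outer_rank R b1 = outer_rank R b2"
  shows "b1 = b2"
  using outer_rank_strict_mono[OF w p1 p2] outer_rank_strict_mono[OF w p2 p1] eq by (cases b1 b2 rule: linorder_cases) auto

lemma card_outer_arcs_le_parent:
  assumes w: "nc_matching (Suc m) S" and np: "(2*m+1, 2*m+2) \<notin> S"
  shows "card (outer_arcs S) \<le> card (outer_arcs (arc_parent m S))"
proof -
  obtain a b where a: "(a, 2*m+1) \<in> S" and b: "(b, 2*m+2) \<in> S" and ba: "b < a"
    using last_arcs[OF w np] by blast
  show ?thesis using card_outer_arcs_split[OF w np a b ba] outer_rank_less[OF nc_matching_arc_parent[OF w] outer_arcs_arc_parent_merged[OF w np a b]] by simp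
qed

lemma arc_split_reconstruct:
  assumes w: "nc_matching (Suc m) S" and np: "(2*m+1, 2*m+2) \<notin> S"
    and a: "(a, 2*m+1) \<in> S" and b: "(b, 2*m+2) \<in> S"
  shows "S = (arc_parent m S - {(b,a)}) \<union> {(a, 2*m+1), (b, 2*m+2)}"
proof -
  have pe: "arc_parent m S = (S - {(a, 2*m+1), (b, 2*m+2)}) \<union> {(b, a)}" using arc_parent_split[OF w np a b] .
  have "(b,a) \<notin> S"
  proof
    assume "(b,a) \<in> S"
    then have "a = 2*m+2" using nc_matching_arc_eq[OF w _ b, of b a] by simp
    then show False using nc_matching_arc[OF w a] by simp
  qed
  then show ?thesis unfolding pe using a b by blast
qed

lemma arc_split_unique:
  assumes w1: "nc_matching (Suc m) S1" and np1: "(2*m+1, 2*m+2) \<notin> S1"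
    and w2: "nc_matching (Suc m) S2" and np2: "(2*m+1, 2*m+2) \<notin> S2"
    and pe: "arc_parent m S1 = arc_parent m S2" and ee: "card (outer_arcs S1) = card (outer_arcs S2)"
  shows "S1 = S2"
proof -
  obtain a1 b1 where a1: "(a1, 2*m+1) \<in> S1" and b1: "(b1, 2*m+2) \<in> S1" and ba1: "b1 < a1"
    using last_arcs[OF w1 np1] by blast
  obtain a2 b2 where a2: "(a2, 2*m+1) \<in> S2" and b2: "(b2, 2*m+2) \<in> S2" and ba2: "b2 < a2"
    using last_arcs[OF w2 np2] by blast
  define R where "R = arc_parent m S1"
  have wR: "nc_matching m R" using nc_matching_arc_parent[OF w1] R_def by simp
  have o1: "(b1,a1) \<in> outer_arcs R" using outer_arcs_arc_parent_merged[OF w1 np1 a1 b1] R_def by simp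
  have o2: "(b2,a2) \<in> outer_arcs R" using outer_arcs_arc_parent_merged[OF w2 np2 a2 b2] R_def pe by simp
  have "outer_rank R b1 = outer_rank R b2" using card_outer_arcs_split[OF w1 np1 a1 b1 ba1] card_outer_arcs_split[OF w2 np2 a2 b2 ba2] ee pe R_def by simp
  then have bb: "b1 = b2" using outer_rank_inj[OF wR o1 o2] by simp
  have "(b1,a1) \<in> R" "(b2,a2) \<in> R" using o1 o2 unfolding outer_arcs_def by auto
  then have aa: "a1 = a2" using nc_matching_arc_eq[OF wR] bb by blast
  have "(arc_parent m S1 - {(b1,a1)}) \<union> {(a1, 2*m+1), (b1, 2*m+2)} = (arc_parent m S2 - {(b2,a2)}) \<union> {(a2, 2*m+1), (b2, 2*m+2)}"
    using pe aa bb by simp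
  then show ?thesis using arc_split_reconstruct[OF w1 np1 a1 b1] arc_split_reconstruct[OF w2 np2 a2 b2] by argo
qed

lemma outer_rank_surj:
  assumes w: "nc_matching m R" and j: "j < card (outer_arcs R)"
  shows "\<exists>b a. (b,a) \<in> outer_arcs R \<and> outer_rank R b = j"
proof -
  define f where "f = (\<lambda>p::nat\<times>nat. outer_rank R (fst p))"
  have inj: "inj_on f (outer_arcs R)"
  proof (rule inj_onI)
    fix p q assume p: "p \<in> outer_arcs R" and q: "q \<in> outer_arcs R" and e: "f p = f q"
    obtain b1 a1 where p1: "p = (b1,a1)" by (cases p) auto
    obtain b2 a2 where q1: "q = (b2,a2)" by (cases q) auto
    have bb: "b1 = b2" using outer_rank_inj[OF w, of b1 a1 b2 a2] p q e p1 q1 f_def by simp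
    have "(b1,a1) \<in> R" "(b2,a2) \<in> R" using p q p1 q1 unfolding outer_arcs_def by auto
    then have "a1 = a2" using nc_matching_arc_eq[OF w] bb by blast
    then show "p = q" using p1 q1 bb by simp
  qed
  have sub: "f ` outer_arcs R \<subseteq> {..<card (outer_arcs R)}"
  proof
    fix x assume "x \<in> f ` outer_arcs R"
    then obtain p where p: "p \<in> outer_arcs R" "x = f p" by auto
    obtain b a where "p = (b,a)" by (cases p) auto
    then show "x \<in> {..<card (outer_arcs R)}" using outer_rank_less[OF w] p f_def by auto
  qed
  have "card (f ` outer_arcs R) = card (outer_arcs R)" using card_image[OF inj] by simp
  then have "f ` outer_arcs R = {..<card (outer_arcs R)}"
    using card_subset_eq[OF _ sub] by simp
  then have "j \<in> f ` outer_arcs R" using j by simp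
  then obtain p where "p \<in> outer_arcs R" "f p = j" by auto
  then show ?thesis unfolding f_def by (cases p) auto
qed

lemma nc_matching_arc_disjoint:
  assumes w: "nc_matching m R" and xy: "(x,y) \<in> R" and ba: "(b,a) \<in> R" and ne: "(x,y) \<noteq> (b,a)"
  shows "x \<noteq> a \<and> x \<noteq> b \<and> y \<noteq> a \<and> y \<noteq> b"
proof -
  have D: "x = b \<and> y = a" if "x = b \<or> x = a \<or> y = b \<or> y = a"
    using nc_matching_arc_eq[OF w xy ba that] .
  have "\<not> (x = b \<and> y = a)" using ne by blast
  then show ?thesis using D by blast
qed

lemma nc_matching_split_outer_arc:
  assumes w: "nc_matching m R" and ob: "(b,a) \<in> outer_arcs R"
  shows "nc_matching (Suc m) ((R - {(b,a)}) \<union> {(a, 2*m+1), (b, 2*m+2)})"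
proof -
  have baR: "(b,a) \<in> R" using ob unfolding outer_arcs_def by auto
  have nenc: "\<And>c d. (c,d) \<in> R \<Longrightarrow> c < b \<Longrightarrow> a < d \<Longrightarrow> False" using ob unfolding outer_arcs_def by auto
  have rba: "1 \<le> b" "b < a" "a \<le> 2*m" using nc_matching_arc[OF w baR] by auto
  define S where "S = (R - {(b,a)}) \<union> {(a, 2*m+1), (b, 2*m+2)}"
  have old: "x \<noteq> a" "x \<noteq> b" "y \<noteq> a" "y \<noteq> b" "y \<le> 2*m" "1 \<le> x" "x < y"
    if "(x,y) \<in> R - {(b,a)}" for x y
  proof -
    have xy: "(x,y) \<in> R" "(x,y) \<noteq> (b,a)" using that by auto
    show "x \<noteq> a" "x \<noteq> b" "y \<noteq> a" "y \<noteq> b"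
      using nc_matching_arc_disjoint[OF w xy(1) baR xy(2)] by simp_all
    show "y \<le> 2*m" "1 \<le> x" "x < y" using nc_matching_arc[OF w xy(1)] by auto
  qed
  have memS: "(x,y) \<in> S \<longleftrightarrow> (x,y) \<in> R - {(b,a)} \<or> (x,y) = (a, 2*m+1) \<or> (x,y) = (b, 2*m+2)" for x y
    unfolding S_def by auto
  show ?thesis unfolding S_def[symmetric]
  proof (rule nc_matchingI)
    fix x y assume "(x,y) \<in> S"
    then consider "(x,y) \<in> R - {(b,a)}" | "(x,y) = (a, 2*m+1)" | "(x,y) = (b, 2*m+2)" using memS by blast
    then show "1 \<le> x \<and> x < y \<and> y \<le> 2 * Suc m"
    proof cases
      case 1 then show ?thesis using old[OF 1] by simp
    qed (use rba in auto)
  next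
    fix x assume x1: "1 \<le> x" and x2: "x \<le> 2 * Suc m"
    show "\<exists>y. (x, y) \<in> S \<or> (y, x) \<in> S"
    proof (cases "x \<le> 2*m")
      case True
      show ?thesis
      proof (cases "x = a \<or> x = b")
        case True then show ?thesis unfolding S_def by blast
      next
        case False
        obtain y where "(x,y) \<in> R \<or> (y,x) \<in> R" using nc_matching_covers[OF w x1 \<open>x \<le> 2*m\<close>] by blast
        then have "(x,y) \<in> R - {(b,a)} \<or> (y,x) \<in> R - {(b,a)}" using False by auto
        then show ?thesis using memS by blast
      qed
    next
      case False
      then have "x = 2*m+1 \<or> x = 2*m+2" using x2 by (simp, linarith)
      then show ?thesis unfolding S_def by blast
    qed
  next
    fix x y u v assume xy: "(x,y) \<in> S" and uv: "(u,v) \<in> S" and sh: "x = u \<or> x = v \<or> y = u \<or> y = v"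
    from xy consider "(x,y) \<in> R - {(b,a)}" | "(x,y) = (a, 2*m+1)" | "(x,y) = (b, 2*m+2)" using memS by blast
    then show "x = u \<and> y = v"
    proof cases
      case 1
      from uv consider "(u,v) \<in> R - {(b,a)}" | "(u,v) = (a, 2*m+1)" | "(u,v) = (b, 2*m+2)" using memS by blast
      then show ?thesis
      proof cases
        case 1 then show ?thesis using nc_matching_arc_eq[OF w, of x y u v] \<open>(x,y) \<in> R - {(b,a)}\<close> sh by blast
      next
        case 2 then show ?thesis using old[OF \<open>(x,y) \<in> R - {(b,a)}\<close>] sh by auto
      next
        case 3 then show ?thesis using old[OF \<open>(x,y) \<in> R - {(b,a)}\<close>] sh by auto
      qed
    next
      case 2
      from uv consider "(u,v) \<in> R - {(b,a)}" | "(u,v) = (a, 2*m+1)" | "(u,v) = (b, 2*m+2)" using memS by blast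
      then show ?thesis
      proof cases
        case 1 then show ?thesis using old[OF 1] sh \<open>(x,y) = (a, 2*m+1)\<close> by auto
      next
        case 2 then show ?thesis using \<open>(x,y) = (a, 2*m+1)\<close> by simp
      next
        case 3 then show ?thesis using \<open>(x,y) = (a, 2*m+1)\<close> sh rba by auto
      qed
    next
      case 3
      from uv consider "(u,v) \<in> R - {(b,a)}" | "(u,v) = (a, 2*m+1)" | "(u,v) = (b, 2*m+2)" using memS by blast
      then show ?thesis
      proof cases
        case 1 then show ?thesis using old[OF 1] sh \<open>(x,y) = (b, 2*m+2)\<close> by auto
      next
        case 2 then show ?thesis using \<open>(x,y) = (b, 2*m+2)\<close> sh rba by auto
      next
        case 3 then show ?thesis using \<open>(x,y) = (b, 2*m+2)\<close> by simp
      qed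
    qed
  next
    fix x y u v assume xy: "(x,y) \<in> S" and uv: "(u,v) \<in> S" and c1: "x < u" and c2: "u < y" and c3: "y < v"
    from xy consider "(x,y) \<in> R - {(b,a)}" | "(x,y) = (a, 2*m+1)" | "(x,y) = (b, 2*m+2)" using memS by blast
    then show False
    proof cases
      case 1
      note o1 = old[OF 1]
      have xyR: "(x,y) \<in> R" using 1 by simp
      from uv consider "(u,v) \<in> R - {(b,a)}" | "(u,v) = (a, 2*m+1)" | "(u,v) = (b, 2*m+2)" using memS by blast
      then show False
      proof cases
        case 1 then show False using nc_matching_noncrossing[OF w xyR _ c1 c2 c3] by simp
      next
        case 2
        then have ua: "u = a" by simp
        show False
        proof (cases "x < b")
          case True then show False using nenc[OF xyR] c2 ua by simp
        next
          case False
          then have "b < x" using o1 by simp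
          then show False using nc_matching_noncrossing[OF w baR xyR] c1 c2 ua by simp
        qed
      next
        case 3
        then have ub: "u = b" by simp
        show False
        proof (cases "y < a")
          case True then show False using nc_matching_noncrossing[OF w xyR baR] c1 c2 ub by simp
        next
          case False
          then have "a < y" using o1 by simp
          then show False using nenc[OF xyR] c1 ub by simp
        qed
      qed
    next
      case 2
      from uv consider "(u,v) \<in> R - {(b,a)}" | "(u,v) = (a, 2*m+1)" | "(u,v) = (b, 2*m+2)" using memS by blast
      then show False
      proof cases
        case 1 then show False using old[OF 1] \<open>(x,y) = (a, 2*m+1)\<close> c3 by simp
      next
        case 2 then show False using \<open>(x,y) = (a, 2*m+1)\<close> c1 by simp
      next
        case 3 then show False using \<open>(x,y) = (a, 2*m+1)\<close> c1 rba by simp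
      qed
    next
      case 3
      from uv consider "(u,v) \<in> R - {(b,a)}" | "(u,v) = (a, 2*m+1)" | "(u,v) = (b, 2*m+2)" using memS by blast
      then show False
      proof cases
        case 1 then show False using old[OF 1] \<open>(x,y) = (b, 2*m+2)\<close> c3 by simp
      next
        case 2 then show False using \<open>(x,y) = (b, 2*m+2)\<close> c3 by simp
      next
        case 3 then show False using \<open>(x,y) = (b, 2*m+2)\<close> c1 by simp
      qed
    qed
  qed
qed

lemma arc_split_exists:
  assumes w: "nc_matching m R" and j1: "1 \<le> j" and j2: "j \<le> card (outer_arcs R)"
  shows "\<exists>S. nc_matching (Suc m) S \<and> (2*m+1, 2*m+2) \<notin> S \<and> arc_parent m S = R \<and> card (outer_arcs S) = j"
proof -
  have jl: "j - 1 < card (outer_arcs R)" using j1 j2 by simp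
  obtain b a where ob: "(b,a) \<in> outer_arcs R" and rkb: "outer_rank R b = j - 1"
    using outer_rank_surj[OF w jl] by blast
  have baR: "(b,a) \<in> R" using ob unfolding outer_arcs_def by auto
  have rba: "b < a" "a \<le> 2*m" using nc_matching_arc[OF w baR] by auto
  define S where "S = (R - {(b,a)}) \<union> {(a, 2*m+1), (b, 2*m+2)}"
  have wS: "nc_matching (Suc m) S" unfolding S_def by (rule nc_matching_split_outer_arc[OF w ob])
  have np: "(2*m+1, 2*m+2) \<notin> S" unfolding S_def using rba nc_matching_arc[OF w, of "2*m+1" "2*m+2"] by auto
  have aS: "(a, 2*m+1) \<in> S" and bS: "(b, 2*m+2) \<in> S" unfolding S_def by auto
  have nR: "(a, 2*m+1) \<notin> R" "(b, 2*m+2) \<notin> R" using nc_matching_arc[OF w, of a "2*m+1"] nc_matching_arc[OF w, of b "2*m+2"] by auto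
  have "arc_parent m S = (S - {(a, 2*m+1), (b, 2*m+2)}) \<union> {(b, a)}" using arc_parent_split[OF wS np aS bS] .
  also have "\<dots> = R" unfolding S_def using nR baR by blast
  finally have pS: "arc_parent m S = R" .
  have "card (outer_arcs S) = Suc (outer_rank (arc_parent m S) b)" using card_outer_arcs_split[OF wS np aS bS] rba by simp
  then have "card (outer_arcs S) = j" using pS rkb j1 by simp
  then show ?thesis using wS np pS by blast
qed

section \<open>From arc diagrams to link patterns\<close>

definition point_of :: "nat \<Rightarrow> nat \<Rightarrow> nat" where
  "point_of m x = (if x = 2*m then 0 else x)"

definition arc_link :: "nat \<Rightarrow> nat \<times> nat \<Rightarrow> nat set" where
  "arc_link m p = {point_of m (fst p), point_of m (snd p)}"

definition link_pattern :: "nat \<Rightarrow> (nat \<times> nat) set \<Rightarrow> nat set set" where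
  "link_pattern m R = arc_link m ` R"

lemma expos_point_of: "1 \<le> x \<Longrightarrow> x \<le> 2*m \<Longrightarrow> expos m (point_of m x) = x"
  unfolding expos_def point_of_def by auto

lemma point_of_less: "1 \<le> x \<Longrightarrow> x \<le> 2*m \<Longrightarrow> point_of m x < 2*m"
  unfolding point_of_def by auto

lemma point_of_expos: "x < 2*m \<Longrightarrow> point_of m (expos m x) = x"
  unfolding expos_def point_of_def by auto

lemma expos_range: "x < 2*m \<Longrightarrow> 1 \<le> expos m x \<and> expos m x \<le> 2*m"
  unfolding expos_def by auto

lemma expos_inj: "x < 2*m \<Longrightarrow> y < 2*m \<Longrightarrow> expos m x = expos m y \<Longrightarrow> x = y"
  unfolding expos_def by (cases "x = 0"; cases "y = 0") auto

lemma expos_image_arc_link: "1 \<le> a \<Longrightarrow> a \<le> 2*m \<Longrightarrow> 1 \<le> b \<Longrightarrow> b \<le> 2*m \<Longrightarrow> expos m ` arc_link m (a,b) = {a,b}"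
  unfolding arc_link_def by (simp add: expos_point_of)

lemma arc_link_inj:
  assumes "1 \<le> a" "a < b" "b \<le> 2*m" "1 \<le> c" "c < d" "d \<le> 2*m" "arc_link m (a,b) = arc_link m (c,d)"
  shows "a = c \<and> b = d"
proof -
  have "expos m ` arc_link m (a,b) = {a,b}" using expos_image_arc_link[of a m b] assms by simp
  moreover have "expos m ` arc_link m (c,d) = {c,d}" using expos_image_arc_link[of c m d] assms by simp
  ultimately have "{a,b} = {c,d}" using assms(7) by simp
  then show ?thesis using assms(2,5) by (auto simp: doubleton_eq_iff)
qed

lemma inj_on_arc_link: "nc_matching m R \<Longrightarrow> inj_on (arc_link m) R"
proof (rule inj_onI)
  fix p q assume w: "nc_matching m R" and p: "p \<in> R" and q: "q \<in> R" and e: "arc_link m p = arc_link m q"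
  obtain a b where ab: "p = (a,b)" by (cases p) auto
  obtain c d where cd: "q = (c,d)" by (cases q) auto
  show "p = q" using arc_link_inj[of a b m c d] nc_matching_arc[OF w, of a b] nc_matching_arc[OF w, of c d] p q e ab cd by auto
qed

lemma link_pattern_memD:
  assumes w: "nc_matching m R" and p: "{x,y} \<in> link_pattern m R"
  shows "(expos m x, expos m y) \<in> R \<or> (expos m y, expos m x) \<in> R"
proof -
  obtain a b where ab: "(a,b) \<in> R" and e: "{x,y} = arc_link m (a,b)" using p unfolding link_pattern_def by auto
  have r: "1 \<le> a" "a < b" "b \<le> 2*m" using nc_matching_arc[OF w ab] by auto
  have "expos m ` {x,y} = {a,b}" using expos_image_arc_link[of a m b] r e by simp
  then have "{expos m x, expos m y} = {a,b}" by simp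
  then show ?thesis using ab by (auto simp: doubleton_eq_iff)
qed

lemma LP_link: "\<sigma> \<in> LP m \<Longrightarrow> p \<in> \<sigma> \<Longrightarrow> \<exists>a b. p = {a,b} \<and> a \<noteq> b \<and> a < 2*m \<and> b < 2*m"
  unfolding LP_def by blast

lemma LP_link_unique: "\<sigma> \<in> LP m \<Longrightarrow> x < 2*m \<Longrightarrow> p \<in> \<sigma> \<Longrightarrow> q \<in> \<sigma> \<Longrightarrow> x \<in> p \<Longrightarrow> x \<in> q \<Longrightarrow> p = q"
  unfolding LP_def by blast

lemma LP_covers: "\<sigma> \<in> LP m \<Longrightarrow> x < 2*m \<Longrightarrow> \<exists>p\<in>\<sigma>. x \<in> p"
  unfolding LP_def by blast

lemma LP_noncrossing: "\<sigma> \<in> LP m \<Longrightarrow> {a,b} \<in> \<sigma> \<Longrightarrow> {c,d} \<in> \<sigma> \<Longrightarrow> a < c \<Longrightarrow> c < b \<Longrightarrow> b < d \<Longrightarrow> False"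
  unfolding LP_def by blast

lemma LPI:
  assumes "\<And>p. p \<in> \<sigma> \<Longrightarrow> \<exists>a b. p = {a,b} \<and> a \<noteq> b \<and> a < 2*m \<and> b < 2*m"
    and "\<And>x. x < 2*m \<Longrightarrow> \<exists>p\<in>\<sigma>. x \<in> p"
    and "\<And>x p q. x < 2*m \<Longrightarrow> p \<in> \<sigma> \<Longrightarrow> q \<in> \<sigma> \<Longrightarrow> x \<in> p \<Longrightarrow> x \<in> q \<Longrightarrow> p = q"
    and "\<And>a b c d. {a,b} \<in> \<sigma> \<Longrightarrow> {c,d} \<in> \<sigma> \<Longrightarrow> a < c \<Longrightarrow> c < b \<Longrightarrow> b < d \<Longrightarrow> False"
  shows "\<sigma> \<in> LP m"
  unfolding LP_def using assms by blast

lemma LP_link_partner: "\<sigma> \<in> LP m \<Longrightarrow> p \<in> \<sigma> \<Longrightarrow> x \<in> p \<Longrightarrow> \<exists>y. p = {x,y} \<and> y \<noteq> x \<and> x < 2*m \<and> y < 2*m"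
  by (drule (1) LP_link) auto

lemma link_pattern_link:
  assumes w: "nc_matching m R" and p: "p \<in> link_pattern m R"
  shows "\<exists>a b. p = {a,b} \<and> a \<noteq> b \<and> a < 2*m \<and> b < 2*m"
proof -
  obtain a b where ab: "(a,b) \<in> R" and p: "p = arc_link m (a,b)" using p unfolding link_pattern_def by auto
  have r: "1 \<le> a" "a < b" "b \<le> 2*m" using nc_matching_arc[OF w ab] by auto
  have "expos m (point_of m a) = a" "expos m (point_of m b) = b" using expos_point_of[of a m] expos_point_of[of b m] r by simp_all
  then have "point_of m a \<noteq> point_of m b" using r by auto
  then show ?thesis
    using p point_of_less[of a m] point_of_less[of b m] r unfolding arc_link_def by auto
qed

lemma link_pattern_in_LP:
  assumes w: "nc_matching m R"
  shows "link_pattern m R \<in> LP m"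
proof (rule LPI)
  fix p assume "p \<in> link_pattern m R"
  then show "\<exists>a b. p = {a,b} \<and> a \<noteq> b \<and> a < 2*m \<and> b < 2*m" using link_pattern_link[OF w] by blast
next
  fix x assume x: "x < 2*m"
  define z where "z = expos m x"
  have z: "1 \<le> z" "z \<le> 2*m" using expos_range[OF x] z_def by auto
  have ux: "point_of m z = x" using point_of_expos[OF x] z_def by simp
  obtain y where "(z,y) \<in> R \<or> (y,z) \<in> R" using nc_matching_covers[OF w z] by blast
  then show "\<exists>p\<in>link_pattern m R. x \<in> p"
  proof
    assume "(z,y) \<in> R" then show ?thesis unfolding link_pattern_def arc_link_def using ux by force
  next
    assume "(y,z) \<in> R" then show ?thesis unfolding link_pattern_def arc_link_def using ux by force
  qed
next
  fix x p q assume x: "x < 2*m" and p: "p \<in> link_pattern m R" and q: "q \<in> link_pattern m R" and xp: "x \<in> p" and xq: "x \<in> q"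
  obtain a b where ab: "(a,b) \<in> R" and pe: "p = arc_link m (a,b)" using p unfolding link_pattern_def by auto
  obtain c d where cd: "(c,d) \<in> R" and qe: "q = arc_link m (c,d)" using q unfolding link_pattern_def by auto
  have r1: "1 \<le> a" "a < b" "b \<le> 2*m" using nc_matching_arc[OF w ab] by auto
  have r2: "1 \<le> c" "c < d" "d \<le> 2*m" using nc_matching_arc[OF w cd] by auto
  have i1: "expos m ` p = {a,b}" using expos_image_arc_link[of a m b] r1 pe by simp
  have i2: "expos m ` q = {c,d}" using expos_image_arc_link[of c m d] r2 qe by simp
  have "expos m x \<in> {a,b}" using i1 xp by blast
  moreover have "expos m x \<in> {c,d}" using i2 xq by blast
  ultimately have "a = c \<or> a = d \<or> b = c \<or> b = d" by auto
  then have "a = c \<and> b = d" using nc_matching_arc_eq[OF w ab cd] by blast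
  then show "p = q" using pe qe by simp
next
  fix a b c d assume ab: "{a,b} \<in> link_pattern m R" and cd: "{c,d} \<in> link_pattern m R" and o: "a < c" "c < b" "b < d"
  have lt: "b < 2*m" "d < 2*m" "a < 2*m" "c < 2*m"
  proof -
    obtain a' b' where "{a,b} = {a',b'}" "a' < 2*m" "b' < 2*m"
      using link_pattern_link[OF w ab] by blast
    then show "b < 2*m" "a < 2*m" by (auto simp: doubleton_eq_iff)
  next
    obtain a' b' where "{c,d} = {a',b'}" "a' < 2*m" "b' < 2*m"
      using link_pattern_link[OF w cd] by blast
    then show "d < 2*m" "c < 2*m" by (auto simp: doubleton_eq_iff)
  qed
  have e1: "(expos m a, expos m b) \<in> R \<or> (expos m b, expos m a) \<in> R" using link_pattern_memD[OF w ab] .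
  have e2: "(expos m c, expos m d) \<in> R \<or> (expos m d, expos m c) \<in> R" using link_pattern_memD[OF w cd] .
  have nz: "b \<noteq> 0" "c \<noteq> 0" "d \<noteq> 0" using o by auto
  then have eb: "expos m b = b" "expos m c = c" "expos m d = d" unfolding expos_def by auto
  have cdR: "(c,d) \<in> R" using e2 eb nc_matching_arc[OF w, of d c] o by auto
  show False
  proof (cases "a = 0")
    case True
    then have "expos m a = 2*m" unfolding expos_def by simp
    then have "(b, 2*m) \<in> R" using e1 eb nc_matching_arc[OF w, of "2*m" b] by auto
    then show False using nc_matching_noncrossing[OF w cdR \<open>(b, 2*m) \<in> R\<close>] o lt by simp
  next
    case False
    then have "expos m a = a" unfolding expos_def by simp
    then have "(a,b) \<in> R" using e1 eb nc_matching_arc[OF w, of b a] o by auto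
    then show False using nc_matching_noncrossing[OF w _ cdR] o by blast
  qed
qed

lemma link_pattern_inj:
  assumes w1: "nc_matching m R1" and w2: "nc_matching m R2" and e: "link_pattern m R1 = link_pattern m R2"
  shows "R1 = R2"
proof -
  have sub: "R1 \<subseteq> R2" if wa: "nc_matching m R1" and wb: "nc_matching m R2" and e: "link_pattern m R1 = link_pattern m R2" for R1 R2
  proof
    fix p assume p: "p \<in> R1"
    obtain a b where ab: "p = (a,b)" by (cases p) auto
    have r: "1 \<le> a" "a < b" "b \<le> 2*m" using nc_matching_arc[OF wa, of a b] p ab by auto
    have "arc_link m (a,b) \<in> link_pattern m R2" using e p ab unfolding link_pattern_def by auto
    then have "{point_of m a, point_of m b} \<in> link_pattern m R2" unfolding arc_link_def by simp
    from link_pattern_memD[OF wb this] have "(a,b) \<in> R2 \<or> (b,a) \<in> R2" using expos_point_of r by simp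
    then show "p \<in> R2" using nc_matching_arc[OF wb, of b a] r ab by auto
  qed
  show ?thesis using sub[OF w1 w2 e] sub[OF w2 w1 e[symmetric]] by blast
qed

definition arcs_of :: "nat \<Rightarrow> nat set set \<Rightarrow> (nat \<times> nat) set" where
  "arcs_of m \<sigma> = {(a,b). 1 \<le> a \<and> a < b \<and> b \<le> 2*m \<and> {point_of m a, point_of m b} \<in> \<sigma>}"

lemma arcs_of_link:
  assumes s: "\<sigma> \<in> LP m" and p: "{x,y} \<in> \<sigma>" and xy: "x \<noteq> y" "x < 2*m" "y < 2*m"
  shows "(expos m x, expos m y) \<in> arcs_of m \<sigma> \<or> (expos m y, expos m x) \<in> arcs_of m \<sigma>"
proof -
  have r: "1 \<le> expos m x" "expos m x \<le> 2*m" "1 \<le> expos m y" "expos m y \<le> 2*m"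
    using expos_range[OF xy(2)] expos_range[OF xy(3)] by auto
  have ne: "expos m x \<noteq> expos m y" using expos_inj[OF xy(2) xy(3)] xy(1) by blast
  have u: "point_of m (expos m x) = x" "point_of m (expos m y) = y" using point_of_expos xy by auto
  show ?thesis
  proof (cases "expos m x < expos m y")
    case True then show ?thesis unfolding arcs_of_def using r u p by simp
  next
    case False then have "expos m y < expos m x" using ne by simp
    then show ?thesis unfolding arcs_of_def using r u p by (simp add: insert_commute)
  qed
qed

lemma arcs_of_LP:
  assumes s: "\<sigma> \<in> LP m"
  shows "nc_matching m (arcs_of m \<sigma>) \<and> \<sigma> = link_pattern m (arcs_of m \<sigma>)"
proof
  let ?R = "arcs_of m \<sigma>"
  have memR: "(a,b) \<in> ?R \<longleftrightarrow> 1 \<le> a \<and> a < b \<and> b \<le> 2*m \<and> {point_of m a, point_of m b} \<in> \<sigma>" for a b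
    unfolding arcs_of_def by simp
  show w: "nc_matching m ?R"
  proof (rule nc_matchingI)
    fix a b assume "(a,b) \<in> ?R" then show "1 \<le> a \<and> a < b \<and> b \<le> 2*m" using memR by simp
  next
    fix z assume z: "1 \<le> z" "z \<le> 2*m"
    define x where "x = point_of m z"
    have x: "x < 2*m" using point_of_less[OF z] x_def by simp
    have ez: "expos m x = z" using expos_point_of[OF z] x_def by simp
    obtain p where p: "p \<in> \<sigma>" "x \<in> p" using LP_covers[OF s x] by blast
    obtain y where y: "p = {x,y}" "y \<noteq> x" "y < 2*m" using LP_link_partner[OF s p] by blast
    have "(expos m x, expos m y) \<in> ?R \<or> (expos m y, expos m x) \<in> ?R"
      using arcs_of_link[OF s _ _ x y(3)] p y by simp
    then show "\<exists>y. (z,y) \<in> ?R \<or> (y,z) \<in> ?R" using ez by blast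
  next
    fix a b c d assume ab: "(a,b) \<in> ?R" and cd: "(c,d) \<in> ?R" and sh: "a = c \<or> a = d \<or> b = c \<or> b = d"
    have r1: "1 \<le> a" "a < b" "b \<le> 2*m" and p1: "{point_of m a, point_of m b} \<in> \<sigma>" using ab memR by auto
    have r2: "1 \<le> c" "c < d" "d \<le> 2*m" and p2: "{point_of m c, point_of m d} \<in> \<sigma>" using cd memR by auto
    obtain t where t: "t \<in> {a,b}" "t \<in> {c,d}" using sh by blast
    have t1: "1 \<le> t" "t \<le> 2*m" using t r1 by auto
    have "{point_of m a, point_of m b} = {point_of m c, point_of m d}"
      by (rule LP_link_unique[OF s point_of_less[OF t1] p1 p2]) (use t in auto)
    then have "arc_link m (a,b) = arc_link m (c,d)" unfolding arc_link_def by simp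
    then show "a = c \<and> b = d" using arc_link_inj[of a b m c d] r1 r2 by simp
  next
    fix a b c d assume ab: "(a,b) \<in> ?R" and cd: "(c,d) \<in> ?R" and o: "a < c" "c < b" "b < d"
    have r1: "1 \<le> a" "a < b" "b \<le> 2*m" and p1: "{point_of m a, point_of m b} \<in> \<sigma>" using ab memR by auto
    have r2: "1 \<le> c" "c < d" "d \<le> 2*m" and p2: "{point_of m c, point_of m d} \<in> \<sigma>" using cd memR by auto
    have ua: "point_of m a = a" "point_of m b = b" "point_of m c = c" unfolding point_of_def using o r2 by auto
    show False
    proof (cases "d = 2*m")
      case True
      then have "point_of m d = 0" unfolding point_of_def by simp
      then have "{0, c} \<in> \<sigma>" using p2 ua by (simp add: insert_commute)
      moreover have "{a, b} \<in> \<sigma>" using p1 ua by simp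
      ultimately show False using LP_noncrossing[OF s, of 0 c a b] o r1 by simp
    next
      case False
      then have "point_of m d = d" unfolding point_of_def by simp
      then show False using LP_noncrossing[OF s, of a b c d] p1 p2 ua o by simp
    qed
  qed
  show "\<sigma> = link_pattern m ?R"
  proof (rule equalityI; rule subsetI)
    fix p assume p: "p \<in> \<sigma>"
    obtain x y where xy: "p = {x,y}" "x \<noteq> y" "x < 2*m" "y < 2*m" using LP_link[OF s p] by blast
    have u: "point_of m (expos m x) = x" "point_of m (expos m y) = y" using point_of_expos xy by auto
    have "(expos m x, expos m y) \<in> ?R \<or> (expos m y, expos m x) \<in> ?R"
      using arcs_of_link[OF s _ xy(2) xy(3) xy(4)] p xy(1) by simp
    then show "p \<in> link_pattern m ?R"
    proof
      assume "(expos m x, expos m y) \<in> ?R"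
      moreover have "arc_link m (expos m x, expos m y) = p" unfolding arc_link_def using u xy by simp
      ultimately show ?thesis unfolding link_pattern_def by force
    next
      assume "(expos m y, expos m x) \<in> ?R"
      moreover have "arc_link m (expos m y, expos m x) = p" unfolding arc_link_def using u xy by (simp add: insert_commute)
      ultimately show ?thesis unfolding link_pattern_def by force
    qed
  next
    fix p assume "p \<in> link_pattern m ?R"
    then obtain a b where "(a,b) \<in> ?R" "p = arc_link m (a,b)" unfolding link_pattern_def by auto
    then show "p \<in> \<sigma>" unfolding arc_link_def using memR by simp
  qed
qed

lemma ex_link_pattern:
  assumes w: "nc_matching m R"
  shows "ex m (link_pattern m R) = card (outer_arcs R)"
proof -
  have enc: "encloses m (arc_link m (c,d)) (arc_link m (a,b)) \<longleftrightarrow> c < a \<and> b < d" if "(a,b) \<in> R" "(c,d) \<in> R" for a b c d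
  proof -
    have r1: "1 \<le> a" "a < b" "b \<le> 2*m" using nc_matching_arc[OF w that(1)] by auto
    have r2: "1 \<le> c" "c < d" "d \<le> 2*m" using nc_matching_arc[OF w that(2)] by auto
    have i1: "expos m ` arc_link m (a,b) = {a,b}" using expos_image_arc_link[of a m b] r1 by simp
    have i2: "expos m ` arc_link m (c,d) = {c,d}" using expos_image_arc_link[of c m d] r2 by simp
    show ?thesis unfolding encloses_def i1 i2 using r1 r2 by simp
  qed
  have "{p \<in> link_pattern m R. \<not> (\<exists>q\<in>link_pattern m R. q \<noteq> p \<and> encloses m q p)} = arc_link m ` outer_arcs R"
  proof (rule equalityI; rule subsetI)
    fix p assume p: "p \<in> {p \<in> link_pattern m R. \<not> (\<exists>q\<in>link_pattern m R. q \<noteq> p \<and> encloses m q p)}"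
    then obtain a b where ab: "(a,b) \<in> R" and pe: "p = arc_link m (a,b)" unfolding link_pattern_def by auto
    have "(a,b) \<in> outer_arcs R" unfolding outer_arcs_def
    proof (safe)
      show "(a,b) \<in> R" using ab .
    next
      fix c d assume cd: "(c,d) \<in> R" "c < fst (a,b)" "snd (a,b) < d"
      have "arc_link m (c,d) \<noteq> arc_link m (a,b)"
      proof
        assume "arc_link m (c,d) = arc_link m (a,b)"
        then show False using arc_link_inj[of c d m a b] nc_matching_arc[OF w cd(1)] nc_matching_arc[OF w ab] cd by simp
      qed
      moreover have "encloses m (arc_link m (c,d)) (arc_link m (a,b))" using enc[OF ab cd(1)] cd by simp
      moreover have "arc_link m (c,d) \<in> link_pattern m R" using cd unfolding link_pattern_def by simp
      ultimately show False using p pe by blast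
    qed
    then show "p \<in> arc_link m ` outer_arcs R" using pe by simp
  next
    fix p assume "p \<in> arc_link m ` outer_arcs R"
    then obtain a b where ab: "(a,b) \<in> outer_arcs R" and pe: "p = arc_link m (a,b)" by auto
    have abR: "(a,b) \<in> R" using ab unfolding outer_arcs_def by simp
    have "\<not> (\<exists>q\<in>link_pattern m R. q \<noteq> p \<and> encloses m q p)"
    proof
      assume "\<exists>q\<in>link_pattern m R. q \<noteq> p \<and> encloses m q p"
      then obtain c d where cd: "(c,d) \<in> R" "encloses m (arc_link m (c,d)) p" unfolding link_pattern_def by auto
      then have "c < a \<and> b < d" using enc[OF abR cd(1)] pe by simp
      then show False using ab cd unfolding outer_arcs_def by auto
    qed
    moreover have "p \<in> link_pattern m R" using abR pe unfolding link_pattern_def by simp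
    ultimately show "p \<in> {p \<in> link_pattern m R. \<not> (\<exists>q\<in>link_pattern m R. q \<noteq> p \<and> encloses m q p)}" by simp
  qed
  moreover have "inj_on (arc_link m) (outer_arcs R)" using inj_on_arc_link[OF w] unfolding outer_arcs_def by (rule inj_on_subset) auto
  ultimately show ?thesis unfolding ex_def by (simp add: card_image)
qed

lemma phi_point_of: "1 \<le> x \<Longrightarrow> x \<le> 2*m \<Longrightarrow> phi (Suc m) (point_of m x) = point_of (Suc m) x"
  unfolding phi_def point_of_def by auto

lemma plus_link_pattern:
  assumes w: "nc_matching m R"
  shows "plus (Suc m) (link_pattern m R) = link_pattern (Suc m) (arc_plus m R)"
proof -
  have "(\<lambda>p. phi (Suc m) ` p) ` link_pattern m R = arc_link (Suc m) ` R"
    unfolding link_pattern_def image_image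
  proof (rule image_cong[OF refl])
    fix p assume "p \<in> R"
    obtain a b where ab: "p = (a,b)" by (cases p) auto
    have r: "1 \<le> a" "a \<le> 2*m" "1 \<le> b" "b \<le> 2*m" using nc_matching_arc[OF w, of a b] \<open>p \<in> R\<close> ab by auto
    show "phi (Suc m) ` arc_link m p = arc_link (Suc m) p"
      unfolding arc_link_def ab using phi_point_of[of a m] phi_point_of[of b m] r by simp
  qed
  moreover have "arc_link (Suc m) (2*m+1, 2*m+2) = {2 * Suc m - 1, 0}"
    unfolding arc_link_def point_of_def by auto
  ultimately show ?thesis unfolding plus_def arc_plus_def link_pattern_def by simp
qed

lemma partner_eqI:
  assumes s: "\<sigma> \<in> LP m" and p: "{x,y} \<in> \<sigma>" and ne: "x \<noteq> y"
  shows "partner \<sigma> x = y"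
  unfolding partner_def
proof (rule the_equality)
  show "{x,y} \<in> \<sigma> \<and> y \<noteq> x" using p ne by auto
next
  fix z assume z: "{x,z} \<in> \<sigma> \<and> z \<noteq> x"
  obtain a b where "{x,y} = {a,b}" "a < 2*m" "b < 2*m" using LP_link[OF s p] by blast
  then have x: "x < 2*m" by (auto simp: doubleton_eq_iff)
  have "{x,z} = {x,y}" using LP_link_unique[OF s x _ p] z by blast
  then show "z = y" using z ne by (auto simp: doubleton_eq_iff)
qed

lemma e_op_link_pattern:
  assumes w: "nc_matching (Suc m) S"
  shows "e_op (Suc m) (2 * Suc m - 1) (link_pattern (Suc m) S) = plus (Suc m) (link_pattern m (arc_parent m S))"
proof -
  let ?\<sigma> = "link_pattern (Suc m) S"
  have wP: "nc_matching m (arc_parent m S)" using nc_matching_arc_parent[OF w] .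
  have sL: "?\<sigma> \<in> LP (Suc m)" using link_pattern_in_LP[OF w] .
  have i: "2 * Suc m - 1 = 2*m+1" by simp
  have jj: "(2 * Suc m - 1 + 1) mod (2 * Suc m) = 0" by simp
  have gp: "arc_link (Suc m) (2*m+1, 2*m+2) = {2*m+1, 0}" unfolding arc_link_def point_of_def by auto
  have pl: "plus (Suc m) (link_pattern m (arc_parent m S)) = link_pattern (Suc m) (arc_plus m (arc_parent m S))"
    using plus_link_pattern[OF wP] .
  show ?thesis
  proof (cases "(2*m+1, 2*m+2) \<in> S")
    case True
    have "{2*m+1, 0} \<in> ?\<sigma>" unfolding link_pattern_def using True gp by (metis image_eqI)
    then have "e_op (Suc m) (2 * Suc m - 1) ?\<sigma> = ?\<sigma>" unfolding e_op_def Let_def jj i by simp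
    moreover have "arc_plus m (arc_parent m S) = S" using arc_parent_last[OF w True] True unfolding arc_plus_def by auto
    ultimately show ?thesis using pl by simp
  next
    case False
    have nin: "{2*m+1, 0} \<notin> ?\<sigma>"
    proof
      assume "{2*m+1, 0} \<in> ?\<sigma>"
      then obtain c d where cd: "(c,d) \<in> S" "arc_link (Suc m) (c,d) = {2*m+1, 0}" unfolding link_pattern_def by auto
      have "c = 2*m+1 \<and> d = 2*m+2"
        using arc_link_inj[of c d "Suc m" "2*m+1" "2*m+2"] nc_matching_arc[OF w cd(1)] cd(2) gp by simp
      then show False using False cd by simp
    qed
    obtain a b where a: "(a, 2*m+1) \<in> S" and b: "(b, 2*m+2) \<in> S" and ba: "b < a" and a2: "a \<le> 2*m" and b1: "1 \<le> b"
      using last_arcs[OF w False] by blast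
    have c1: "{a, 2*m+1} = {2*m+1, a}" by (rule insert_commute)
    have c2: "{b, 0} = {0, b}" by (rule insert_commute)
    have c3: "{b, a} = {a, b}" by (rule insert_commute)
    have ga0: "arc_link (Suc m) (a, 2*m+1) = {a, 2*m+1}" unfolding arc_link_def point_of_def using a2 by simp
    have gb0: "arc_link (Suc m) (b, 2*m+2) = {b, 0}" unfolding arc_link_def point_of_def using ba a2 by simp
    have gba0: "arc_link (Suc m) (b, a) = {b, a}" unfolding arc_link_def point_of_def using ba a2 by simp
    have ga: "arc_link (Suc m) (a, 2*m+1) = {2*m+1, a}" using ga0 c1 by simp
    have gb: "arc_link (Suc m) (b, 2*m+2) = {0, b}" using gb0 c2 by simp
    have gba: "arc_link (Suc m) (b, a) = {a, b}" using gba0 c3 by simp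
    have aS: "{2*m+1, a} \<in> ?\<sigma>" unfolding link_pattern_def using a ga by (metis image_eqI)
    have bS: "{0, b} \<in> ?\<sigma>" unfolding link_pattern_def using b gb by (metis image_eqI)
    have pa: "partner ?\<sigma> (2*m+1) = a" using partner_eqI[OF sL aS] a2 by simp
    have pb: "partner ?\<sigma> 0 = b" using partner_eqI[OF sL bS] b1 by simp
    have e1: "e_op (Suc m) (2 * Suc m - 1) ?\<sigma> = (?\<sigma> - {{2*m+1, a}, {0, b}}) \<union> {{2*m+1, 0}, {a, b}}"
      unfolding e_op_def Let_def jj i using nin pa pb by simp
    have pe: "arc_parent m S = (S - {(a, 2*m+1), (b, 2*m+2)}) \<union> {(b, a)}" using arc_parent_split[OF w False a b] .
    have injS: "inj_on (arc_link (Suc m)) S" using inj_on_arc_link[OF w] .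
    have "arc_link (Suc m) ` (S - {(a, 2*m+1), (b, 2*m+2)}) = arc_link (Suc m) ` S - arc_link (Suc m) ` {(a, 2*m+1), (b, 2*m+2)}"
      by (rule inj_on_image_set_diff[OF injS]) (use a b in auto)
    then have "link_pattern (Suc m) (arc_plus m (arc_parent m S)) = insert {2*m+1, 0} ((?\<sigma> - {{2*m+1, a}, {0, b}}) \<union> {{a, b}})"
      unfolding arc_plus_def pe link_pattern_def using ga gb gba gp by simp
    then show ?thesis using e1 pl by auto
  qed
qed

lemma parent_link_pattern:
  assumes w: "nc_matching (Suc m) S"
  shows "parent (Suc m) (link_pattern (Suc m) S) = link_pattern m (arc_parent m S)"
proof -
  let ?\<sigma> = "link_pattern (Suc m) S"
  let ?\<pi> = "link_pattern m (arc_parent m S)"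
  have wP: "nc_matching m (arc_parent m S)" using nc_matching_arc_parent[OF w] .
  have pL: "?\<pi> \<in> LP m" using link_pattern_in_LP[OF wP] .
  have pl: "plus (Suc m) ?\<pi> = link_pattern (Suc m) (arc_plus m (arc_parent m S))" using plus_link_pattern[OF wP] .
  note eop = e_op_link_pattern[OF w]
  show ?thesis unfolding parent_def
  proof (rule the_equality)
    show "?\<pi> \<in> LP (Suc m - 1) \<and> e_op (Suc m) (2 * Suc m - 1) ?\<sigma> = plus (Suc m) ?\<pi>" using pL eop by simp
  next
    fix \<pi> assume h: "\<pi> \<in> LP (Suc m - 1) \<and> e_op (Suc m) (2 * Suc m - 1) ?\<sigma> = plus (Suc m) \<pi>"
    then have piL: "\<pi> \<in> LP m" by simp
    define R' where "R' = arcs_of m \<pi>"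
    have wR': "nc_matching m R'" and pe: "\<pi> = link_pattern m R'" using arcs_of_LP[OF piL] R'_def by auto
    have "link_pattern (Suc m) (arc_plus m R') = link_pattern (Suc m) (arc_plus m (arc_parent m S))"
      using h eop plus_link_pattern[OF wR'] pl pe by simp
    then have "arc_plus m R' = arc_plus m (arc_parent m S)" using link_pattern_inj[OF nc_matching_arc_plus[OF wR'] nc_matching_arc_plus[OF wP]] by simp
    then have "R' = arc_parent m S" using arc_parent_arc_plus[OF wR'] arc_parent_arc_plus[OF wP] by metis
    then show "\<pi> = ?\<pi>" using pe by simp
  qed
qed

section \<open>Parents, children and the recursion\<close>

lemma LP_obtain_link_pattern:
  assumes "\<sigma> \<in> LP m"
  obtains R where "nc_matching m R" "\<sigma> = link_pattern m R"
  using arcs_of_LP[OF assms] by blast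

text \<open>A named predicate, since the equation \<open>\<sigma> = plus m (parent m \<sigma>)\<close> loops as a rewrite rule.\<close>

definition is_plus :: "nat \<Rightarrow> linkpat \<Rightarrow> bool" where
  "is_plus m \<sigma> \<longleftrightarrow> \<sigma> = plus m (parent m \<sigma>)"

lemma is_plus_link_pattern_iff:
  assumes w: "nc_matching (Suc m) S"
  shows "is_plus (Suc m) (link_pattern (Suc m) S) \<longleftrightarrow> (2*m+1, 2*m+2) \<in> S"
proof -
  have wP: "nc_matching m (arc_parent m S)" using nc_matching_arc_parent[OF w] .
  have plus_parent: "plus (Suc m) (parent (Suc m) (link_pattern (Suc m) S))
                     = link_pattern (Suc m) (arc_plus m (arc_parent m S))"
    using parent_link_pattern[OF w] plus_link_pattern[OF wP] by simp
  show ?thesis unfolding is_plus_def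
  proof
    assume "link_pattern (Suc m) S = plus (Suc m) (parent (Suc m) (link_pattern (Suc m) S))"
    then have "link_pattern (Suc m) S = link_pattern (Suc m) (arc_plus m (arc_parent m S))"
      using plus_parent by (rule trans)
    then have "S = arc_plus m (arc_parent m S)"
      using link_pattern_inj[OF w nc_matching_arc_plus[OF wP]] by blast
    then show "(2*m+1, 2*m+2) \<in> S" unfolding arc_plus_def by (metis insertI1)
  next
    assume "(2*m+1, 2*m+2) \<in> S"
    then have "arc_plus m (arc_parent m S) = S"
      using arc_parent_last[OF w] unfolding arc_plus_def by auto
    then show "link_pattern (Suc m) S = plus (Suc m) (parent (Suc m) (link_pattern (Suc m) S))"
      using plus_parent by simp
  qed
qed

lemma plus_in_LP: "\<pi> \<in> LP m \<Longrightarrow> plus (Suc m) \<pi> \<in> LP (Suc m)"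
  by (erule LP_obtain_link_pattern) (simp add: plus_link_pattern link_pattern_in_LP nc_matching_arc_plus)

lemma parent_plus: "\<pi> \<in> LP m \<Longrightarrow> parent (Suc m) (plus (Suc m) \<pi>) = \<pi>"
  by (erule LP_obtain_link_pattern)
    (simp add: plus_link_pattern parent_link_pattern nc_matching_arc_plus arc_parent_arc_plus)

lemma is_plus_plus: "\<pi> \<in> LP m \<Longrightarrow> is_plus (Suc m) (plus (Suc m) \<pi>)"
  by (simp add: is_plus_def parent_plus)

lemma ex_plus: "\<pi> \<in> LP m \<Longrightarrow> ex (Suc m) (plus (Suc m) \<pi>) = Suc (ex m \<pi>)"
  by (erule LP_obtain_link_pattern)
    (simp add: plus_link_pattern ex_link_pattern nc_matching_arc_plus card_outer_arcs_arc_plus)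

lemma parent_in_LP: "\<sigma> \<in> LP (Suc m) \<Longrightarrow> parent (Suc m) \<sigma> \<in> LP m"
  by (erule LP_obtain_link_pattern)
    (simp add: parent_link_pattern link_pattern_in_LP nc_matching_arc_parent)

lemma ex_le_ex_parent:
  assumes "\<sigma> \<in> LP (Suc m)" "\<not> is_plus (Suc m) \<sigma>"
  shows "ex (Suc m) \<sigma> \<le> ex m (parent (Suc m) \<sigma>)"
  using assms(1)
proof (rule LP_obtain_link_pattern)
  fix S assume w: "nc_matching (Suc m) S" and \<sigma>: "\<sigma> = link_pattern (Suc m) S"
  then have "(2*m+1, 2*m+2) \<notin> S" using is_plus_link_pattern_iff assms(2) by simp
  then show ?thesis
    using card_outer_arcs_le_parent[OF w] \<sigma>
    by (simp add: ex_link_pattern w nc_matching_arc_parent parent_link_pattern)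
qed

lemma ex_pos:
  assumes "\<sigma> \<in> LP (Suc m)"
  shows "1 \<le> ex (Suc m) \<sigma>"
  using assms
proof (rule LP_obtain_link_pattern)
  fix S assume w: "nc_matching (Suc m) S" and \<sigma>: "\<sigma> = link_pattern (Suc m) S"
  show ?thesis
  proof (cases "(2*m+1, 2*m+2) \<in> S")
    case True
    then have "arc_plus m (arc_parent m S) = S"
      using arc_parent_last[OF w] unfolding arc_plus_def by auto
    then show ?thesis
      using card_outer_arcs_arc_plus[OF nc_matching_arc_parent[OF w]] ex_link_pattern[OF w] \<sigma> by simp
  next
    case False
    obtain a b where "(a, 2*m+1) \<in> S" "(b, 2*m+2) \<in> S" "b < a"
      using last_arcs[OF w False] by blast
    then show ?thesis using card_outer_arcs_split[OF w False] ex_link_pattern[OF w] \<sigma> by simp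
  qed
qed

lemma non_plus_eqI:
  assumes "\<sigma>1 \<in> LP (Suc m)" "\<not> is_plus (Suc m) \<sigma>1"
    and "\<sigma>2 \<in> LP (Suc m)" "\<not> is_plus (Suc m) \<sigma>2"
    and "parent (Suc m) \<sigma>1 = parent (Suc m) \<sigma>2" "ex (Suc m) \<sigma>1 = ex (Suc m) \<sigma>2"
  shows "\<sigma>1 = \<sigma>2"
proof -
  obtain S1 where w1: "nc_matching (Suc m) S1" and \<sigma>1: "\<sigma>1 = link_pattern (Suc m) S1"
    using LP_obtain_link_pattern[OF assms(1)] .
  obtain S2 where w2: "nc_matching (Suc m) S2" and \<sigma>2: "\<sigma>2 = link_pattern (Suc m) S2"
    using LP_obtain_link_pattern[OF assms(3)] .
  have "arc_parent m S1 = arc_parent m S2"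
    using assms(5) link_pattern_inj[OF nc_matching_arc_parent[OF w1] nc_matching_arc_parent[OF w2]]
    by (simp add: \<sigma>1 \<sigma>2 parent_link_pattern w1 w2)
  moreover have "card (outer_arcs S1) = card (outer_arcs S2)"
    using assms(6) by (simp add: \<sigma>1 \<sigma>2 ex_link_pattern w1 w2)
  moreover have "(2*m+1, 2*m+2) \<notin> S1" "(2*m+1, 2*m+2) \<notin> S2"
    using is_plus_link_pattern_iff w1 w2 assms(2,4) \<sigma>1 \<sigma>2 by auto
  ultimately show ?thesis using arc_split_unique[OF w1 _ w2] \<sigma>1 \<sigma>2 by simp
qed

lemma non_plus_child_exists:
  assumes "\<pi> \<in> LP m" "1 \<le> j" "j \<le> ex m \<pi>"
  obtains \<sigma> where "\<sigma> \<in> LP (Suc m)" "\<not> is_plus (Suc m) \<sigma>"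
    "parent (Suc m) \<sigma> = \<pi>" "ex (Suc m) \<sigma> = j"
proof -
  obtain R where w: "nc_matching m R" and \<pi>: "\<pi> = link_pattern m R"
    using LP_obtain_link_pattern[OF assms(1)] .
  obtain S where wS: "nc_matching (Suc m) S" and "(2*m+1, 2*m+2) \<notin> S"
    and "arc_parent m S = R" "card (outer_arcs S) = j"
    using arc_split_exists[OF w assms(2)] assms(3) ex_link_pattern[OF w] \<pi> by auto
  then show ?thesis
    using that[of "link_pattern (Suc m) S"] link_pattern_in_LP[OF wS]
      is_plus_link_pattern_iff[OF wS] parent_link_pattern[OF wS] ex_link_pattern[OF wS] \<pi>
    by simp
qed

lemma LP_0: "LP 0 = {{}}"
  unfolding LP_def by auto

lemma ex_le: "\<sigma> \<in> LP m \<Longrightarrow> ex m \<sigma> \<le> m"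
proof (induction m arbitrary: \<sigma>)
  case 0
  then show ?case by (simp add: LP_0 ex_def)
next
  case (Suc m)
  define \<pi> where "\<pi> = parent (Suc m) \<sigma>"
  have \<pi>: "\<pi> \<in> LP m" using parent_in_LP[OF Suc.prems] by (simp add: \<pi>_def)
  have "ex (Suc m) \<sigma> \<le> Suc (ex m \<pi>)"
  proof (cases "is_plus (Suc m) \<sigma>")
    case True
    then have "\<sigma> = plus (Suc m) \<pi>" unfolding is_plus_def \<pi>_def .
    then show ?thesis using ex_plus[OF \<pi>] by simp
  next
    case False
    then show ?thesis using ex_le_ex_parent[OF Suc.prems] by (simp add: \<pi>_def)
  qed
  then show ?case using Suc.IH[OF \<pi>] by simp
qed

lemma LP_1: "LP 1 = {plus 1 {}}"
proof -
  have "\<sigma> = plus 1 {}" if "\<sigma> \<in> LP 1" for \<sigma>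
  proof (rule ccontr)
    assume "\<sigma> \<noteq> plus 1 {}"
    moreover have "parent 1 \<sigma> = {}" using parent_in_LP[of \<sigma> 0] that by (simp add: LP_0)
    ultimately have "ex 1 \<sigma> \<le> ex 0 {}" using ex_le_ex_parent[of \<sigma> 0] that by (simp add: is_plus_def)
    then show False using ex_pos[of \<sigma> 0] that by (simp add: ex_def)
  qed
  moreover have "plus 1 {} \<in> LP 1" using plus_in_LP[of "{}" 0] by (simp add: LP_0)
  ultimately show ?thesis by blast
qed

lemma finite_LP: "finite (LP m)"
proof (rule finite_subset)
  show "LP m \<subseteq> Pow (Pow {..<2*m})"
  proof
    fix \<sigma> assume "\<sigma> \<in> LP m"
    then have "p \<subseteq> {..<2*m}" if "p \<in> \<sigma>" for p using LP_link[OF _ that] by blast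
    then show "\<sigma> \<in> Pow (Pow {..<2*m})" by auto
  qed
qed simp

lemma anc_Suc_Suc: "anc (Suc m) (Suc k) \<sigma> = anc m k (parent (Suc m) \<sigma>)"
  by (induction k) simp_all

lemma sigma_at_Suc: "j \<le> m \<Longrightarrow> sigma_at (Suc m) \<sigma> j = sigma_at m (parent (Suc m) \<sigma>) j"
  unfolding sigma_at_def using anc_Suc_Suc[of m "m - j" \<sigma>] by (simp add: Suc_diff_le)

lemma interaction_Suc:
  assumes "1 \<le> m"
  shows "interaction (Suc m) \<sigma> = interaction m (parent (Suc m) \<sigma>) + (if is_plus (Suc m) \<sigma> then 0 else 1)"
proof -
  define Q where "Q n \<tau> j \<longleftrightarrow> sigma_at n \<tau> j \<noteq> plus j (sigma_at n \<tau> (j - 1))" for n \<tau> j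
  have "Q (Suc m) \<sigma> j = Q m (parent (Suc m) \<sigma>) j" if "j \<le> m" for j
    using that by (simp add: Q_def sigma_at_Suc)
  moreover have "Q (Suc m) \<sigma> (Suc m) \<longleftrightarrow> \<not> is_plus (Suc m) \<sigma>"
    by (simp add: Q_def sigma_at_def is_plus_def)
  ultimately have "{j \<in> {2..Suc m}. Q (Suc m) \<sigma> j}
      = {j \<in> {2..m}. Q m (parent (Suc m) \<sigma>) j} \<union> (if is_plus (Suc m) \<sigma> then {} else {Suc m})"
    using assms by (auto simp: le_Suc_eq)
  then show ?thesis unfolding interaction_def Q_def[symmetric] by (simp add: card_insert_if)
qed

lemma interaction_le: "interaction n \<sigma> \<le> n - 1"
proof -
  have "interaction n \<sigma> \<le> card {2..n}"
    unfolding interaction_def by (rule card_mono) auto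
  then show ?thesis by simp
qed

lemma card_eq_sum_card_fibres:
  assumes "finite A" "finite K" "f ` A \<subseteq> K"
  shows "card A = (\<Sum>k\<in>K. card {x \<in> A. f x = k})"
  using sum.group[OF assms, of "\<lambda>_. 1::nat"] by simp

lemma bij_betw_plus:
  "bij_betw (plus (Suc m)) (LP m) {\<sigma> \<in> LP (Suc m). is_plus (Suc m) \<sigma>}"
proof (rule bij_betw_byWitness[where f' = "parent (Suc m)"])
  show "\<forall>\<pi>\<in>LP m. parent (Suc m) (plus (Suc m) \<pi>) = \<pi>"
    by (simp add: parent_plus)
  show "\<forall>\<sigma>\<in>{\<sigma> \<in> LP (Suc m). is_plus (Suc m) \<sigma>}. plus (Suc m) (parent (Suc m) \<sigma>) = \<sigma>"
    unfolding is_plus_def by blast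
  show "plus (Suc m) ` LP m \<subseteq> {\<sigma> \<in> LP (Suc m). is_plus (Suc m) \<sigma>}"
    by (auto simp: plus_in_LP is_plus_plus)
  show "parent (Suc m) ` {\<sigma> \<in> LP (Suc m). is_plus (Suc m) \<sigma>} \<subseteq> LP m"
    by (auto simp: parent_in_LP)
qed

lemma bij_betw_parent_non_plus:
  assumes "1 \<le> j"
  shows "bij_betw (parent (Suc m))
           {\<sigma> \<in> LP (Suc m). \<not> is_plus (Suc m) \<sigma> \<and> ex (Suc m) \<sigma> = j}
           {\<pi> \<in> LP m. j \<le> ex m \<pi>}"
proof (rule bij_betw_imageI)
  show "inj_on (parent (Suc m)) {\<sigma> \<in> LP (Suc m). \<not> is_plus (Suc m) \<sigma> \<and> ex (Suc m) \<sigma> = j}"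
  proof (rule inj_onI)
    fix \<sigma>1 \<sigma>2
    assume "\<sigma>1 \<in> {\<sigma> \<in> LP (Suc m). \<not> is_plus (Suc m) \<sigma> \<and> ex (Suc m) \<sigma> = j}"
      "\<sigma>2 \<in> {\<sigma> \<in> LP (Suc m). \<not> is_plus (Suc m) \<sigma> \<and> ex (Suc m) \<sigma> = j}"
      and "parent (Suc m) \<sigma>1 = parent (Suc m) \<sigma>2"
    then show "\<sigma>1 = \<sigma>2" using non_plus_eqI[of \<sigma>1 m \<sigma>2] by simp
  qed
  show "parent (Suc m) ` {\<sigma> \<in> LP (Suc m). \<not> is_plus (Suc m) \<sigma> \<and> ex (Suc m) \<sigma> = j}
        = {\<pi> \<in> LP m. j \<le> ex m \<pi>}"
  proof (intro equalityI subsetI)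
    fix \<pi> assume "\<pi> \<in> parent (Suc m) ` {\<sigma> \<in> LP (Suc m). \<not> is_plus (Suc m) \<sigma> \<and> ex (Suc m) \<sigma> = j}"
    then obtain \<sigma> where \<sigma>: "\<sigma> \<in> LP (Suc m)" "\<not> is_plus (Suc m) \<sigma>" "ex (Suc m) \<sigma> = j"
      and \<pi>: "\<pi> = parent (Suc m) \<sigma>"
      by blast
    then show "\<pi> \<in> {\<pi> \<in> LP m. j \<le> ex m \<pi>}"
      using parent_in_LP[OF \<sigma>(1)] ex_le_ex_parent[OF \<sigma>(1,2)] by simp
  next
    fix \<pi> assume "\<pi> \<in> {\<pi> \<in> LP m. j \<le> ex m \<pi>}"
    then obtain \<sigma> where "\<sigma> \<in> LP (Suc m)" "\<not> is_plus (Suc m) \<sigma>"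
      "parent (Suc m) \<sigma> = \<pi>" "ex (Suc m) \<sigma> = j"
      using non_plus_child_exists[of \<pi> m j] assms by auto
    then show "\<pi> \<in> parent (Suc m) ` {\<sigma> \<in> LP (Suc m). \<not> is_plus (Suc m) \<sigma> \<and> ex (Suc m) \<sigma> = j}"
      by blast
  qed
qed

lemma card_LP_Suc_ex_int:
  assumes "1 \<le> m" "1 \<le> k"
  shows "card {\<sigma> \<in> LP (Suc m). ex (Suc m) \<sigma> = k \<and> interaction (Suc m) \<sigma> = l}
         = card {\<pi> \<in> LP m. ex m \<pi> = k - 1 \<and> interaction m \<pi> = l}
           + card {\<pi> \<in> LP m. k \<le> ex m \<pi> \<and> Suc (interaction m \<pi>) = l}"
proof -
  let ?P = "is_plus (Suc m)"
  let ?A = "{\<sigma> \<in> LP (Suc m). ex (Suc m) \<sigma> = k \<and> interaction (Suc m) \<sigma> = l}"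
  have bij_plus: "bij_betw (plus (Suc m)) {\<pi> \<in> LP m. ex m \<pi> = k - 1 \<and> interaction m \<pi> = l}
          {\<sigma> \<in> {\<sigma> \<in> LP (Suc m). ?P \<sigma>}. ex (Suc m) \<sigma> = k \<and> interaction (Suc m) \<sigma> = l}"
  proof (rule bij_betw_Collect[OF bij_betw_plus])
    fix \<pi> assume "\<pi> \<in> LP m"
    then have "interaction (Suc m) (plus (Suc m) \<pi>) = interaction m \<pi>"
      using interaction_Suc[OF assms(1), of "plus (Suc m) \<pi>"] by (simp add: parent_plus is_plus_plus)
    then show "(ex (Suc m) (plus (Suc m) \<pi>) = k \<and> interaction (Suc m) (plus (Suc m) \<pi>) = l)
               \<longleftrightarrow> (ex m \<pi> = k - 1 \<and> interaction m \<pi> = l)"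
      using assms(2) \<open>\<pi> \<in> LP m\<close> by (auto simp: ex_plus)
  qed
  have "{\<sigma> \<in> {\<sigma> \<in> LP (Suc m). ?P \<sigma>}. ex (Suc m) \<sigma> = k \<and> interaction (Suc m) \<sigma> = l}
        = {\<sigma> \<in> ?A. ?P \<sigma>}"
    by blast
  then have plus_part:
    "card {\<sigma> \<in> ?A. ?P \<sigma>} = card {\<pi> \<in> LP m. ex m \<pi> = k - 1 \<and> interaction m \<pi> = l}"
    using bij_betw_same_card[OF bij_plus] by simp
  have bij_parent: "bij_betw (parent (Suc m))
          {\<sigma> \<in> {\<sigma> \<in> LP (Suc m). \<not> ?P \<sigma> \<and> ex (Suc m) \<sigma> = k}. interaction (Suc m) \<sigma> = l}
          {\<pi> \<in> {\<pi> \<in> LP m. k \<le> ex m \<pi>}. Suc (interaction m \<pi>) = l}"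
    by (intro bij_betw_Collect[OF bij_betw_parent_non_plus[OF assms(2)]])
      (simp add: interaction_Suc[OF assms(1)])
  have "{\<sigma> \<in> {\<sigma> \<in> LP (Suc m). \<not> ?P \<sigma> \<and> ex (Suc m) \<sigma> = k}. interaction (Suc m) \<sigma> = l}
        = {\<sigma> \<in> ?A. \<not> ?P \<sigma>}"
    "{\<pi> \<in> {\<pi> \<in> LP m. k \<le> ex m \<pi>}. Suc (interaction m \<pi>) = l}
        = {\<pi> \<in> LP m. k \<le> ex m \<pi> \<and> Suc (interaction m \<pi>) = l}"
    by blast+
  then have non_plus_part:
    "card {\<sigma> \<in> ?A. \<not> ?P \<sigma>} = card {\<pi> \<in> LP m. k \<le> ex m \<pi> \<and> Suc (interaction m \<pi>) = l}"
    using bij_betw_same_card[OF bij_parent] by simp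
  have "card ?A = card ({\<sigma> \<in> ?A. ?P \<sigma>} \<union> {\<sigma> \<in> ?A. \<not> ?P \<sigma>})"
    by (rule arg_cong[where f = card]) blast
  also have "\<dots> = card {\<sigma> \<in> ?A. ?P \<sigma>} + card {\<sigma> \<in> ?A. \<not> ?P \<sigma>}"
    by (rule card_Un_disjoint) (auto simp: finite_LP)
  finally show ?thesis using plus_part non_plus_part by simp
qed

lemma card_LP_ex_int:
  assumes "1 \<le> n"
  shows "real (card {\<sigma> \<in> LP n. ex n \<sigma> = k \<and> interaction n \<sigma> = l}) = ex_int_number n k l"
  using assms
proof (induction n arbitrary: k l rule: nat_induct_at_least)
  case base
  have "ex 1 (plus 1 {}) = 1" using ex_plus[of "{}" 0] by (simp add: LP_0 ex_def)
  moreover have "interaction 1 \<sigma> = 0" for \<sigma> by (simp add: interaction_def)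
  ultimately have "{\<sigma> \<in> LP 1. ex 1 \<sigma> = k \<and> interaction 1 \<sigma> = l}
                   = (if k = 1 \<and> l = 0 then {plus 1 {}} else {})"
    unfolding LP_1 by auto
  then show ?case by (simp add: ex_int_number_def)
next
  case (Suc m)
  note m = Suc.hyps and IH = Suc.IH
  show ?case
  proof (cases "k = 0")
    case True
    then have "{\<sigma> \<in> LP (Suc m). ex (Suc m) \<sigma> = k \<and> interaction (Suc m) \<sigma> = l} = {}"
      using ex_pos by fastforce
    then have "card {\<sigma> \<in> LP (Suc m). ex (Suc m) \<sigma> = k \<and> interaction (Suc m) \<sigma> = l} = 0"
      by (simp only: card.empty)
    then show ?thesis using True by (simp add: ex_int_number_def)
  next
    case False
    then have k: "1 \<le> k" by simp
    note rec = card_LP_Suc_ex_int[OF m k, of l]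
    show ?thesis
    proof (cases l)
      case 0
      then show ?thesis using rec IH[of "k - 1" l] ex_int_number_rec_0[OF m k] by simp
    next
      case (Suc l')
      have "card {\<pi> \<in> LP m. k \<le> ex m \<pi> \<and> Suc (interaction m \<pi>) = l}
            = (\<Sum>i=k..m. card {\<pi> \<in> {\<pi> \<in> LP m. k \<le> ex m \<pi> \<and> Suc (interaction m \<pi>) = l}. ex m \<pi> = i})"
        using ex_le by (intro card_eq_sum_card_fibres) (auto simp: finite_LP)
      also have "\<dots> = (\<Sum>i=k..m. card {\<pi> \<in> LP m. ex m \<pi> = i \<and> interaction m \<pi> = l'})"
        using Suc by (intro sum.cong refl arg_cong[where f = card]) auto
      finally show ?thesis
        using rec IH Suc ex_int_number_rec[OF m k, of l'] by simp
    qed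
  qed
qed

lemma card_LP_ex:
  assumes "1 \<le> k" "k \<le> n"
  shows "real (card {\<sigma> \<in> LP n. ex n \<sigma> = k}) = real ((2*n - k) choose n) * real k / real (2*n - k)"
proof -
  have "interaction n \<sigma> \<le> n" for \<sigma> using interaction_le[of n \<sigma>] by linarith
  then have "card {\<sigma> \<in> LP n. ex n \<sigma> = k}
        = (\<Sum>l\<le>n. card {\<sigma> \<in> {\<sigma> \<in> LP n. ex n \<sigma> = k}. interaction n \<sigma> = l})"
    by (intro card_eq_sum_card_fibres) (auto simp: finite_LP)
  also have "\<dots> = (\<Sum>l\<le>n. card {\<sigma> \<in> LP n. ex n \<sigma> = k \<and> interaction n \<sigma> = l})"
    by (intro sum.cong refl arg_cong[where f = card]) auto
  finally have "real (card {\<sigma> \<in> LP n. ex n \<sigma> = k}) = (\<Sum>l\<le>n. ex_int_number n k l)"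
    using assms card_LP_ex_int[of n k] by simp
  then show ?thesis using sum_ex_int_number[OF assms] by simp
qed

lemma card_LP_interaction:
  assumes "1 \<le> n"
  shows "real (card {\<sigma> \<in> LP n. interaction n \<sigma> = l})
         = 1 / real n * real (n choose (l + 1)) * real (n choose l)"
proof -
  have "card {\<sigma> \<in> LP n. interaction n \<sigma> = l}
        = (\<Sum>k=1..n. card {\<sigma> \<in> {\<sigma> \<in> LP n. interaction n \<sigma> = l}. ex n \<sigma> = k})"
  proof (intro card_eq_sum_card_fibres)
    show "ex n ` {\<sigma> \<in> LP n. interaction n \<sigma> = l} \<subseteq> {1..n}"
      using assms ex_le ex_pos[of _ "n - 1"] by auto
  qed (simp_all add: finite_LP)
  also have "\<dots> = (\<Sum>k=1..n. card {\<sigma> \<in> LP n. ex n \<sigma> = k \<and> interaction n \<sigma> = l})"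
    by (intro sum.cong refl arg_cong[where f = card]) auto
  finally have "real (card {\<sigma> \<in> LP n. interaction n \<sigma> = l}) = (\<Sum>k=1..n. ex_int_number n k l)"
    using card_LP_ex_int[OF assms] by simp
  then show ?thesis using sum_ex_int_number_narayana[OF assms] by simp
qed

lemma card_LP:
  assumes "1 \<le> n"
  shows "real (card (LP n)) = 1 / (real n + 1) * real ((2*n) choose n)"
proof -
  have "card (LP n) = (\<Sum>l\<le>n - 1. card {\<sigma> \<in> LP n. interaction n \<sigma> = l})"
    using interaction_le card_eq_sum_card_fibres[of "LP n" "{..n - 1}" "interaction n"]
    by (auto simp: finite_LP)
  then have "real (card (LP n)) = (\<Sum>l\<le>n - 1. 1 / real n * real (n choose (l + 1)) * real (n choose l))"
    using card_LP_interaction[OF assms] by simp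
  then show ?thesis using sum_narayana[OF assms] by simp
qed

theorem mainTheorem4:
  fixes n :: nat
  assumes "n \<ge> 1"
  shows "real (card (LP n)) = (1 / (real n + 1)) * real ((2*n) choose n) \<and>
         (\<forall>k. 1 \<le> k \<and> k \<le> n \<longrightarrow>
           real (card {\<sigma> \<in> LP n. ex n \<sigma> = k})
             = real ((2*n - k) choose n) * real k / real (2*n - k)) \<and>
         (\<forall>l. l \<le> n - 1 \<longrightarrow>
           real (card {\<sigma> \<in> LP n. interaction n \<sigma> = l})
             = (1 / real n) * real (n choose (l + 1)) * real (n choose l))"
  using card_LP[OF assms] card_LP_ex card_LP_interaction[OF assms] by blast

end
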